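(* (a) The IB reachability problem is recursively equivalent to the IB control-state reachability problem for FIFO machines. (b) The IB reachability problem is recursively reducible to the IB deadlock problem for FIFO machines. Here, for a FIFO machine $M$, a tuple $(L_c)_{c\in\mathit{Ch}}$ of non-empty regular bounded languages $L_c\subseteq\Sigma_c^\ast$, a configuration $s$ and a control state $q$: IB reachability asks whether $s\in\mathrm{Reach}_M(L_!)$; IB control-state reachability asks whether $(q,\mathbf{w})\in\mathrm{Reach}_M(L_!)$ for some $\mathbf{w}$; IB deadlock asks whether $\mathrm{Reach}_M(L_!)$ contains a deadlock.
   Context: A bounded language over non-empty words $(w_1,\ldots,w_n)$ is a language $L\subseteq w_1^\ast\cdots w_n^\ast$. A FIFO machine is $M=(Q,\mathit{Ch},\Sigma,\Delta,q_0)$ with finite control states $Q$, initial state $q_0$, finite channels $\mathit{Ch}$, alphabet $\Sigma=\biguplus_c\Sigma_c$, and $\Delta\subseteq Q\times A_M\times Q$, $A_M=\{c!a,c?a\mid c\in\mathit{Ch},a\in\Sigma_c\}$. Configurations $(q,\mathbf{w})$ with $\mathbf{w}\in\prod_c\Sigma_c^\ast$; initial $(q_0,(\varepsilon)_c)$. A send $c!a$ appends $a$ to channel $c$; a receive $c?a$ removes $a$ from the head of channel $c$ (only possible if $a$ is at the head); other channels unchanged; the control state moves along a transition of $\Delta$. $\mathrm{Reach}_M(L)$ is the set of configurations reachable from the initial one via a label word in $L\subseteq A_M^\ast$. $L_!=\{\sigma\in A_M^\ast\mid\mathrm{proj}_{c!}(\sigma)\in L_c\ \forall c\}$ where $\mathrm{proj}_{c!}$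 keeps the messages of send actions on $c$ and erases all other actions. A deadlock is a configuration with no successor. *)

theory Defs
  imports Main "HOL-Library.Nat_Bijection"
begin

datatype recf = Zero | Succ | Proj nat | Comp recf "recf list" | Prim recf recf | Mu recf

inductive eval :: "recf \<Rightarrow> nat list \<Rightarrow> nat \<Rightarrow> bool" where
  ev_zero: "eval Zero xs 0"
| ev_succ: "eval Succ (x # xs) (Suc x)"
| ev_proj: "i < length xs \<Longrightarrow> eval (Proj i) xs (xs ! i)"
| ev_comp: "length ys = length gs \<Longrightarrow> (\<forall>i<length gs. eval (gs ! i) xs (ys ! i))
            \<Longrightarrow> eval f ys z \<Longrightarrow> eval (Comp f gs) xs z"
| ev_prim0: "eval g xs y \<Longrightarrow> eval (Prim g h) (0 # xs) y"
| ev_primS: "eval (Prim g h) (n # xs) y \<Longrightarrow> eval h (y # n # xs) z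
            \<Longrightarrow> eval (Prim g h) (Suc n # xs) z"
| ev_mu: "eval f (n # xs) 0 \<Longrightarrow> (\<forall>m<n. \<exists>k. k > 0 \<and> eval f (m # xs) k)
            \<Longrightarrow> eval (Mu f) xs n"

definition computable :: "(nat \<Rightarrow> nat) \<Rightarrow> bool" where
  "computable f \<longleftrightarrow> (\<exists>r. \<forall>n. eval r [n] (f n))"

definition many_one_reducible ::
  "('a \<Rightarrow> nat) \<Rightarrow> ('a \<Rightarrow> bool) \<Rightarrow> ('a \<Rightarrow> bool) \<Rightarrow>
   ('b \<Rightarrow> nat) \<Rightarrow> ('b \<Rightarrow> bool) \<Rightarrow> ('b \<Rightarrow> bool) \<Rightarrow> bool" where
  "many_one_reducible encA validA yesA encB validB yesB \<longleftrightarrow>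
     (\<exists>f. computable f \<and>
        (\<forall>i. validA i \<longrightarrow> (\<exists>j. validB j \<and> f (encA i) = encB j \<and> (yesA i \<longleftrightarrow> yesB j))))"

text \<open>Channels are 0..<nch; the message alphabet of channel c is alph!c;
  messages are implicitly tagged by their channel, so the alphabets are disjoint.\<close>
datatype act = Snd nat nat | Rcv nat nat   (* channel, message *)

record fifo =
  states :: "nat list"
  nch :: nat
  alph :: "nat list list"
  delta :: "(nat \<times> act \<times> nat) list"
  init :: nat

type_synonym cfg = "nat \<times> nat list list"

definition actions :: "fifo \<Rightarrow> act set" where
  "actions M = {Snd c a | c a. c < nch M \<and> a \<in> set (alph M ! c)}
             \<union> {Rcv c a | c a. c < nch M \<and> a \<in> set (alph M ! c)}"

definition wf_fifo :: "fifo \<Rightarrow> bool" where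
  "wf_fifo M \<longleftrightarrow> length (alph M) = nch M \<and> init M \<in> set (states M) \<and>
     (\<forall>(q, a, q') \<in> set (delta M). q \<in> set (states M) \<and> q' \<in> set (states M) \<and> a \<in> actions M)"

fun apply_act :: "act \<Rightarrow> nat list list \<Rightarrow> nat list list option" where
  "apply_act (Snd c a) ws = (if c < length ws then Some (ws[c := ws ! c @ [a]]) else None)"
| "apply_act (Rcv c a) ws = (if c < length ws then
      (case ws ! c of [] \<Rightarrow> None | b # r \<Rightarrow> if b = a then Some (ws[c := r]) else None)
    else None)"

definition step :: "fifo \<Rightarrow> cfg \<Rightarrow> act \<Rightarrow> cfg \<Rightarrow> bool" where
  "step M c \<alpha> c' \<longleftrightarrow> (fst c, \<alpha>, fst c') \<in> set (delta M) \<and> apply_act \<alpha> (snd c) = Some (snd c')"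

fun runs :: "fifo \<Rightarrow> cfg \<Rightarrow> act list \<Rightarrow> cfg \<Rightarrow> bool" where
  "runs M c [] c' \<longleftrightarrow> c' = c"
| "runs M c (\<alpha> # \<sigma>) c' \<longleftrightarrow> (\<exists>c''. step M c \<alpha> c'' \<and> runs M c'' \<sigma> c')"

definition init_cfg :: "fifo \<Rightarrow> cfg" where
  "init_cfg M = (init M, replicate (nch M) [])"

definition Reach :: "fifo \<Rightarrow> act list set \<Rightarrow> cfg set" where
  "Reach M L = {c. \<exists>\<sigma>\<in>L. runs M (init_cfg M) \<sigma> c}"

definition is_config :: "fifo \<Rightarrow> cfg \<Rightarrow> bool" where
  "is_config M c \<longleftrightarrow> fst c \<in> set (states M) \<and> length (snd c) = nch M \<and>
     (\<forall>i<nch M. set (snd c ! i) \<subseteq> set (alph M ! i))"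

definition deadlock :: "fifo \<Rightarrow> cfg \<Rightarrow> bool" where
  "deadlock M c \<longleftrightarrow> \<not> (\<exists>\<alpha> c'. step M c \<alpha> c')"

fun proj_send :: "nat \<Rightarrow> act list \<Rightarrow> nat list" where
  "proj_send c [] = []"
| "proj_send c (Snd d a # \<sigma>) = (if d = c then a # proj_send c \<sigma> else proj_send c \<sigma>)"
| "proj_send c (Rcv d a # \<sigma>) = proj_send c \<sigma>"

definition Lsend :: "fifo \<Rightarrow> (nat \<Rightarrow> nat list set) \<Rightarrow> act list set" where
  "Lsend M L = {\<sigma>. set \<sigma> \<subseteq> actions M \<and> (\<forall>c<nch M. proj_send c \<sigma> \<in> L c)}"

record nfa =
  nstart :: "nat list"
  ntrans :: "(nat \<times> nat \<times> nat) list"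
  nfinal :: "nat list"

definition nfa_step :: "nfa \<Rightarrow> nat set \<Rightarrow> nat \<Rightarrow> nat set" where
  "nfa_step A S a = {q'. \<exists>q\<in>S. (q, a, q') \<in> set (ntrans A)}"

definition nfa_lang :: "nfa \<Rightarrow> nat list set" where
  "nfa_lang A = {w. foldl (nfa_step A) (set (nstart A)) w \<inter> set (nfinal A) \<noteq> {}}"

definition bounded_lang :: "nat list set \<Rightarrow> bool" where
  "bounded_lang L \<longleftrightarrow> (\<exists>ws. (\<forall>w\<in>set ws. w \<noteq> []) \<and>
     (\<forall>u\<in>L. \<exists>ks. length ks = length ws \<and>
        u = concat (map (\<lambda>(w, k). concat (replicate k w)) (zip ws ks))))"

definition valid_langs :: "fifo \<Rightarrow> nfa list \<Rightarrow> bool" where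
  "valid_langs M As \<longleftrightarrow> length As = nch M \<and>
     (\<forall>c<nch M. nfa_lang (As ! c) \<noteq> {} \<and> bounded_lang (nfa_lang (As ! c)) \<and>
                nfa_lang (As ! c) \<subseteq> lists (set (alph M ! c)))"

definition LsendA :: "fifo \<Rightarrow> nfa list \<Rightarrow> act list set" where
  "LsendA M As = Lsend M (\<lambda>c. nfa_lang (As ! c))"

definition enc_nl :: "nat list \<Rightarrow> nat" where "enc_nl = list_encode"
definition enc_nll :: "nat list list \<Rightarrow> nat" where "enc_nll ws = list_encode (map list_encode ws)"

fun enc_act :: "act \<Rightarrow> nat" where
  "enc_act (Snd c a) = sum_encode (Inl (prod_encode (c, a)))"
| "enc_act (Rcv c a) = sum_encode (Inr (prod_encode (c, a)))"

definition enc_fifo :: "fifo \<Rightarrow> nat" where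
  "enc_fifo M = list_encode [list_encode (states M), nch M, enc_nll (alph M),
     list_encode (map (\<lambda>(q, a, q'). prod_encode (q, prod_encode (enc_act a, q'))) (delta M)),
     init M]"

definition enc_nfa :: "nfa \<Rightarrow> nat" where
  "enc_nfa A = list_encode [list_encode (nstart A),
     list_encode (map (\<lambda>(q, a, q'). prod_encode (q, prod_encode (a, q'))) (ntrans A)),
     list_encode (nfinal A)]"

definition enc_langs :: "nfa list \<Rightarrow> nat" where
  "enc_langs As = list_encode (map enc_nfa As)"

type_synonym reach_inst = "fifo \<times> nfa list \<times> cfg"
type_synonym cs_inst = "fifo \<times> nfa list \<times> nat"
type_synonym dl_inst = "fifo \<times> nfa list"

definition enc_reach :: "reach_inst \<Rightarrow> nat" where
  "enc_reach i = (case i of (M, As, (q, ws)) \<Rightarrow>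
     list_encode [enc_fifo M, enc_langs As, prod_encode (q, enc_nll ws)])"
definition valid_reach :: "reach_inst \<Rightarrow> bool" where
  "valid_reach i = (case i of (M, As, s) \<Rightarrow> wf_fifo M \<and> valid_langs M As \<and> is_config M s)"
definition IB_reach :: "reach_inst \<Rightarrow> bool" where
  "IB_reach i = (case i of (M, As, s) \<Rightarrow> s \<in> Reach M (LsendA M As))"

definition enc_cs :: "cs_inst \<Rightarrow> nat" where
  "enc_cs i = (case i of (M, As, q) \<Rightarrow> list_encode [enc_fifo M, enc_langs As, q])"
definition valid_cs :: "cs_inst \<Rightarrow> bool" where
  "valid_cs i = (case i of (M, As, q) \<Rightarrow> wf_fifo M \<and> valid_langs M As \<and> q \<in> set (states M))"
definition IB_cs_reach :: "cs_inst \<Rightarrow> bool" where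
  "IB_cs_reach i = (case i of (M, As, q) \<Rightarrow> (\<exists>ws. (q, ws) \<in> Reach M (LsendA M As)))"

definition enc_dl :: "dl_inst \<Rightarrow> nat" where
  "enc_dl i = (case i of (M, As) \<Rightarrow> list_encode [enc_fifo M, enc_langs As])"
definition valid_dl :: "dl_inst \<Rightarrow> bool" where
  "valid_dl i = (case i of (M, As) \<Rightarrow> wf_fifo M \<and> valid_langs M As)"
definition IB_deadlock :: "dl_inst \<Rightarrow> bool" where
  "IB_deadlock i = (case i of (M, As) \<Rightarrow> (\<exists>s\<in>Reach M (LsendA M As). deadlock M s))"

end

theory Submission
  imports Defs
begin

(* Each reduction adds a gadget to the machine, using the code enc_fifo M as a state and as a
   message that M does not use.

   Reachability of (q, w) reduces to control-state reachability: after q, a chain of fresh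
   states sends a marker h on every channel c, receives w_c and then h. This succeeds exactly
   when channel c held w_c, and appending h to every language keeps it regular and bounded.

   Control-state reachability of q reduces to reachability and to deadlock by adding a channel
   whose language {[], [0]} permits a single send. From q the machine sends 0 on it and enters a
   fresh state. For reachability, the fresh state empties all channels, and the target is the
   fresh state with all channels empty. For deadlock, the fresh state has no transitions, while
   every old state gets a self-loop sending on the new channel and so is never deadlocked.
   Conversely, a run of the new machine can leave the old states only from q, afterwards it only
   receives, and erasing the new channel from the part before the exit gives a run of M to q.

   Composing the first and the last reduction reduces reachability to deadlock. The maps
   between instances are computable because on codes they are built from pairing, folds over
   encoded lists and bounded iteration, all of which are mu-recursive. *)

section \<open>Mu-recursive computability\<close>

lemma eval_Proj: "i < length xs \<Longrightarrow> y = xs ! i \<Longrightarrow> eval (Proj i) xs y"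
  using ev_proj by simp

lemma eval_subst: "eval r xs y \<Longrightarrow> y = z \<Longrightarrow> eval r xs z"
  by simp

lemma eval_Comp1: "eval g xs y \<Longrightarrow> eval f [y] z \<Longrightarrow> eval (Comp f [g]) xs z"
  by (rule ev_comp[where ys = "[y]"]) auto

lemma eval_Comp2:
  "eval g1 xs y1 \<Longrightarrow> eval g2 xs y2 \<Longrightarrow> eval f [y1, y2] z \<Longrightarrow> eval (Comp f [g1, g2]) xs z"
  by (rule ev_comp[where ys = "[y1, y2]"]) (auto simp: less_Suc_eq nth_Cons')

lemmas eval_intros = eval_Proj ev_zero ev_succ ev_prim0 ev_primS eval_Comp1 eval_Comp2

definition r_add :: recf where "r_add = Prim (Proj 0) (Comp Succ [Proj 0])"

lemma eval_r_add: "eval r_add [n, x] (n + x)"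
  by (induction n) (auto simp: r_add_def intro!: eval_intros)

definition r_mul :: recf where "r_mul = Prim Zero (Comp r_add [Proj 0, Proj 2])"

lemma eval_r_mul: "eval r_mul [n, x] (n * x)"
proof (induction n)
  case (Suc n)
  have "eval (Comp r_add [Proj 0, Proj 2]) [n * x, n, x] (n * x + x)"
    by (auto intro!: eval_intros eval_r_add)
  with Suc show ?case by (auto simp: r_mul_def add.commute intro: eval_intros)
qed (auto simp: r_mul_def intro!: eval_intros)

definition r_pred :: recf where "r_pred = Prim Zero (Proj 1)"

lemma eval_r_pred: "eval r_pred [n] (n - 1)"
proof (induction n)
  case (Suc n)
  then show ?case by (auto simp: r_pred_def intro!: ev_primS[where y = "n - 1"] eval_intros)
qed (auto simp: r_pred_def intro!: eval_intros)

definition r_monus :: recf where "r_monus = Prim (Proj 0) (Comp r_pred [Proj 0])"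

lemma eval_r_monus: "eval r_monus [y, x] (x - y)"
proof (induction y)
  case (Suc y)
  have "eval (Comp r_pred [Proj 0]) [x - y, y, x] (x - Suc y)"
    by (auto intro!: eval_intros eval_subst[OF eval_r_pred])
  with Suc show ?case by (auto simp: r_monus_def intro: eval_intros)
qed (auto simp: r_monus_def intro!: eval_intros)

definition r_triangle :: recf where
  "r_triangle = Prim Zero (Comp r_add [Proj 0, Comp Succ [Proj 1]])"

lemma eval_r_triangle: "eval r_triangle [n] (triangle n)"
proof (induction n)
  case (Suc n)
  have "eval (Comp r_add [Proj 0, Comp Succ [Proj 1]]) [triangle n, n] (triangle n + Suc n)"
    by (auto intro!: eval_intros eval_subst[OF eval_r_add])
  with Suc show ?case by (auto simp: r_triangle_def intro: eval_intros)
qed (auto simp: r_triangle_def intro!: eval_intros)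

fun r_const :: "nat \<Rightarrow> recf" where
  "r_const 0 = Zero"
| "r_const (Suc k) = Comp Succ [r_const k]"

lemma eval_r_const: "eval (r_const k) xs k"
  by (induction k) (auto intro!: eval_intros)

definition r_funpow :: "recf \<Rightarrow> recf" where "r_funpow r = Prim (Proj 0) (Comp r [Proj 0])"

lemma eval_r_funpow:
  assumes "\<And>n. eval r [n] (g n)"
  shows "eval (r_funpow r) [k, x] ((g ^^ k) x)"
  by (induction k) (auto simp: r_funpow_def intro!: eval_intros assms)

definition computes2 :: "recf \<Rightarrow> (nat \<Rightarrow> nat \<Rightarrow> nat) \<Rightarrow> bool" where
  "computes2 r F \<longleftrightarrow> (\<forall>x y. eval r [x, y] (F x y))"

lemma computable_compose2:
  assumes "computes2 r F" "computable f" "computable g"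
  shows "computable (\<lambda>n. F (f n) (g n))"
proof -
  obtain rf rg where "\<forall>n. eval rf [n] (f n)" "\<forall>n. eval rg [n] (g n)"
    using assms(2,3) unfolding computable_def by blast
  then have "\<forall>n. eval (Comp r [rf, rg]) [n] (F (f n) (g n))"
    using assms(1) by (auto simp: computes2_def intro!: eval_intros)
  then show ?thesis unfolding computable_def by blast
qed

lemma computable_compose:
  assumes "computable F" "computable g"
  shows "computable (\<lambda>n. F (g n))"
proof -
  obtain rF rg where "\<forall>n. eval rF [n] (F n)" "\<forall>n. eval rg [n] (g n)"
    using assms unfolding computable_def by blast
  then have "\<forall>n. eval (Comp rF [rg]) [n] (F (g n))"
    by (auto intro!: eval_intros)
  then show ?thesis unfolding computable_def by blast
qed

lemma computable_id [intro!]: "computable (\<lambda>n. n)"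
  unfolding computable_def by (auto intro!: exI[of _ "Proj 0"] eval_intros)

lemma computable_const [intro!]: "computable (\<lambda>n. k)"
  unfolding computable_def using eval_r_const by blast

lemma computable_add [intro!]:
  "computable f \<Longrightarrow> computable g \<Longrightarrow> computable (\<lambda>n. f n + g n)"
  by (rule computable_compose2[where r = r_add]) (auto simp: computes2_def eval_r_add)

lemma computable_mult [intro!]:
  "computable f \<Longrightarrow> computable g \<Longrightarrow> computable (\<lambda>n. f n * g n)"
  by (rule computable_compose2[where r = r_mul]) (auto simp: computes2_def eval_r_mul)

lemma computable_diff [intro!]:
  "computable f \<Longrightarrow> computable g \<Longrightarrow> computable (\<lambda>n. f n - g n)"
  using computable_compose2[where r = r_monus and F = "\<lambda>y x. x - y" and f = g and g = f]
  by (auto simp: computes2_def eval_r_monus)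

lemma computable_Suc [intro!]: "computable f \<Longrightarrow> computable (\<lambda>n. Suc (f n))"
  using computable_add[of f "\<lambda>n. 1"] by auto

lemma computable_triangle [intro!]: "computable f \<Longrightarrow> computable (\<lambda>n. triangle (f n))"
  by (rule computable_compose[where F = triangle]) (auto simp: computable_def intro: eval_r_triangle)

lemma computable_prod_encode [intro!]:
  "computable f \<Longrightarrow> computable g \<Longrightarrow> computable (\<lambda>n. prod_encode (f n, g n))"
  unfolding prod_encode_def by auto

lemma computable_if_zero [intro!]:
  assumes "computable t" "computable f" "computable g"
  shows "computable (\<lambda>n. if t n = 0 then f n else g n)"
proof -
  have "computable (\<lambda>n. f n * (1 - t n) + g n * (1 - (1 - t n)))"
    using assms by auto
  also have "(\<lambda>n. f n * (1 - t n) + g n * (1 - (1 - t n))) = (\<lambda>n. if t n = 0 then f n else g n)"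
    by auto
  finally show ?thesis .
qed

lemma computable_Least:
  assumes "computes2 r F" "\<And>n. \<exists>k. F k n = 0"
  shows "computable (\<lambda>n. LEAST k. F k n = 0)"
proof -
  have "eval (Mu r) [n] (LEAST k. F k n = 0)" for n
  proof (rule ev_mu)
    show "eval r [LEAST k. F k n = 0, n] 0"
      using assms LeastI_ex[of "\<lambda>k. F k n = 0"] by (metis computes2_def)
    show "\<forall>m<(LEAST k. F k n = 0). \<exists>k>0. eval r [m, n] k"
      using assms(1) not_less_Least by (fastforce simp: computes2_def)
  qed
  then show ?thesis unfolding computable_def by blast
qed

lemma computable_funpow:
  assumes "computable g" "computable k" "computable x"
  shows "computable (\<lambda>n. (g ^^ k n) (x n))"
proof -
  obtain r where "\<And>n. eval r [n] (g n)"
    using assms(1) unfolding computable_def by blast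
  then have "computes2 (r_funpow r) (\<lambda>k x. (g ^^ k) x)"
    unfolding computes2_def using eval_r_funpow by blast
  then show ?thesis using computable_compose2 assms(2,3) by blast
qed

definition pfst :: "nat \<Rightarrow> nat" where "pfst p = fst (prod_decode p)"
definition psnd :: "nat \<Rightarrow> nat" where "psnd p = snd (prod_decode p)"

lemma pfst_prod_encode [simp]: "pfst (prod_encode (a, b)) = a"
  by (simp add: pfst_def)

lemma psnd_prod_encode [simp]: "psnd (prod_encode (a, b)) = b"
  by (simp add: psnd_def)

definition triangle_root :: "nat \<Rightarrow> nat" where
  "triangle_root n = (LEAST k. Suc n - triangle (Suc k) = 0)"

lemma le_triangle: "n \<le> triangle n"
  by (induction n) auto

lemma triangle_root_bounds:
  "triangle (triangle_root n) \<le> n" "n < triangle (Suc (triangle_root n))"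
proof -
  let ?P = "\<lambda>k. Suc n - triangle (Suc k) = 0"
  have "?P n" using le_triangle[of "Suc n"] by simp
  then show "n < triangle (Suc (triangle_root n))"
    unfolding triangle_root_def using LeastI[of ?P n] by simp
  show "triangle (triangle_root n) \<le> n"
  proof (cases "triangle_root n")
    case (Suc m)
    then have "m < triangle_root n" by simp
    then have "\<not> ?P m"
      unfolding triangle_root_def by (rule not_less_Least)
    with Suc show ?thesis by simp
  qed simp
qed

lemma prod_decode_triangle_root:
  "prod_decode n = (n - triangle (triangle_root n),
     triangle_root n - (n - triangle (triangle_root n)))"
proof -
  let ?k = "triangle_root n"
  have "prod_encode (n - triangle ?k, ?k - (n - triangle ?k)) = n"
    using triangle_root_bounds[of n] by (simp add: prod_encode_def)
  then show ?thesis by (metis prod_encode_inverse)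
qed

lemma computable_triangle_root: "computable triangle_root"
  unfolding triangle_root_def
proof (rule computable_Least)
  let ?r = "Comp r_monus [Comp r_triangle [Comp Succ [Proj 0]], Comp Succ [Proj 1]]"
  show "computes2 ?r (\<lambda>k n. Suc n - triangle (Suc k))"
    unfolding computes2_def
    by (auto intro!: eval_intros eval_r_monus eval_r_triangle simp del: triangle_Suc)
  show "\<exists>k. Suc n - triangle (Suc k) = 0" for n
    using le_triangle by (metis diff_is_0_eq)
qed

lemma computable_pfst [intro!]: "computable f \<Longrightarrow> computable (\<lambda>n. pfst (f n))"
  using computable_compose[OF computable_triangle_root]
  by (auto simp: pfst_def prod_decode_triangle_root)

lemma computable_psnd [intro!]: "computable f \<Longrightarrow> computable (\<lambda>n. psnd (f n))"
  using computable_compose[OF computable_triangle_root]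
  by (auto simp: psnd_def prod_decode_triangle_root)

definition computable2 :: "(nat \<Rightarrow> nat \<Rightarrow> nat) \<Rightarrow> bool" where
  "computable2 g \<longleftrightarrow> computable (\<lambda>p. g (pfst p) (psnd p))"

definition computable3 :: "(nat \<Rightarrow> nat \<Rightarrow> nat \<Rightarrow> nat) \<Rightarrow> bool" where
  "computable3 g \<longleftrightarrow> computable (\<lambda>p. g (pfst p) (pfst (psnd p)) (psnd (psnd p)))"

lemma computable2_apply [intro]:
  assumes "computable2 g" "computable a" "computable b"
  shows "computable (\<lambda>n. g (a n) (b n))"
  using computable_compose[OF assms(1)[unfolded computable2_def] computable_prod_encode[OF assms(2,3)]]
  by simp

lemma computable3_apply [intro]:
  assumes "computable3 g" "computable a" "computable b" "computable c"
  shows "computable (\<lambda>n. g (a n) (b n) (c n))"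
  using computable_compose[OF assms(1)[unfolded computable3_def]
      computable_prod_encode[OF assms(2) computable_prod_encode[OF assms(3,4)]]]
  by simp

lemma computable_funpow_param:
  assumes "computable2 G" "computable k" "computable z" "computable x"
  shows "computable (\<lambda>n. (G (z n) ^^ k n) (x n))"
proof -
  \<comment> \<open>the parameter travels along in the first component of a pair\<close>
  let ?H = "\<lambda>p. prod_encode (pfst p, G (pfst p) (psnd p))"
  have H: "computable ?H"
    using assms(1) unfolding computable2_def
    by (intro computable_prod_encode computable_pfst computable_id)
  have "(?H ^^ m) (prod_encode (a, b)) = prod_encode (a, (G a ^^ m) b)" for m a b
    by (induction m) auto
  moreover have "computable (\<lambda>n. psnd ((?H ^^ k n) (prod_encode (z n, x n))))"
    using assms(2-4) by (intro computable_psnd computable_funpow[OF H] computable_prod_encode)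
  ultimately show ?thesis by simp
qed

lemma list_encode_ge_length: "length xs \<le> list_encode xs"
  by (induction xs) (use le_prod_encode_2 in \<open>auto intro: le_trans\<close>)

lemma list_encode_gt_mem: "x \<in> set xs \<Longrightarrow> x < list_encode xs"
proof (induction xs)
  case (Cons y ys)
  then show ?case
    using le_prod_encode_1[of y "list_encode ys"] le_prod_encode_2[of "list_encode ys" y] by auto
qed simp

definition lcons :: "nat \<Rightarrow> nat \<Rightarrow> nat" where "lcons x l = Suc (prod_encode (x, l))"
definition lhd :: "nat \<Rightarrow> nat" where "lhd l = pfst (l - 1)"
definition ltl :: "nat \<Rightarrow> nat" where "ltl l = psnd (l - 1)"

lemma lcons_list_encode [simp]: "lcons x (list_encode xs) = list_encode (x # xs)"
  by (simp add: lcons_def)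

lemma lcons_0 [simp]: "lcons x 0 = list_encode [x]"
  using lcons_list_encode[of x "[]"] by simp

lemma lhd_list_encode [simp]: "lhd (list_encode (x # xs)) = x"
  and ltl_list_encode [simp]: "ltl (list_encode (x # xs)) = list_encode xs"
  by (simp_all add: lhd_def ltl_def)

lemma list_encode_Cons_neq_0 [simp]: "list_encode (x # xs) \<noteq> 0"
  by simp

declare list_encode.simps(2) [simp del]

lemma computable_lcons [intro!]:
  "computable f \<Longrightarrow> computable g \<Longrightarrow> computable (\<lambda>n. lcons (f n) (g n))"
  unfolding lcons_def by (intro computable_Suc computable_prod_encode)

lemma computable_list_encode_Cons [intro!]:
  "computable f \<Longrightarrow> computable (\<lambda>n. list_encode (xs n)) \<Longrightarrow> computable (\<lambda>n. list_encode (f n # xs n))"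
  using computable_lcons[of f "\<lambda>n. list_encode (xs n)"] by simp

lemma computable_lhd [intro!]: "computable f \<Longrightarrow> computable (\<lambda>n. lhd (f n))"
  unfolding lhd_def by auto

lemma computable_ltl [intro!]: "computable f \<Longrightarrow> computable (\<lambda>n. ltl (f n))"
  unfolding ltl_def by auto

definition lfoldl_step :: "(nat \<Rightarrow> nat \<Rightarrow> nat \<Rightarrow> nat) \<Rightarrow> nat \<Rightarrow> nat \<Rightarrow> nat" where
  "lfoldl_step g z s =
     (if pfst s = 0 then s else prod_encode (ltl (pfst s), g z (lhd (pfst s)) (psnd s)))"

text \<open>The code of a list bounds its length, so iterating the step as many times as the code
  itself processes the whole list; once the list is exhausted the step is the identity.\<close>

definition lfoldl :: "(nat \<Rightarrow> nat \<Rightarrow> nat \<Rightarrow> nat) \<Rightarrow> nat \<Rightarrow> nat \<Rightarrow> nat \<Rightarrow> nat" where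
  "lfoldl g z l a = psnd ((lfoldl_step g z ^^ l) (prod_encode (l, a)))"

lemma lfoldl_step_funpow:
  "length xs \<le> k \<Longrightarrow> (lfoldl_step g z ^^ k) (prod_encode (list_encode xs, a)) =
     prod_encode (0, foldl (\<lambda>acc x. g z x acc) a xs)"
proof (induction xs arbitrary: k a)
  case Nil
  have "(lfoldl_step g z ^^ k) (prod_encode (0, a)) = prod_encode (0, a)"
    by (induction k) (auto simp: lfoldl_step_def)
  then show ?case by simp
next
  case (Cons x xs)
  then obtain k' where k: "k = Suc k'" "length xs \<le> k'"
    by (cases k) auto
  have "lfoldl_step g z (prod_encode (list_encode (x # xs), a)) = prod_encode (list_encode xs, g z x a)"
    by (simp add: lfoldl_step_def)
  then show ?case
    using Cons.IH[OF k(2)] by (simp add: k(1) funpow_Suc_right del: funpow.simps)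
qed

lemma lfoldl_list_encode [simp]:
  "lfoldl g z (list_encode xs) a = foldl (\<lambda>acc x. g z x acc) a xs"
  unfolding lfoldl_def using lfoldl_step_funpow[OF list_encode_ge_length] by simp

lemma computable_lfoldl [intro]:
  assumes "computable3 g" "computable z" "computable l" "computable a"
  shows "computable (\<lambda>n. lfoldl g (z n) (l n) (a n))"
proof -
  have "computable2 (lfoldl_step g)"
    unfolding computable2_def lfoldl_step_def
    by (intro computable_if_zero computable3_apply[OF assms(1)] computable_prod_encode
        computable_pfst computable_psnd computable_lhd computable_ltl computable_id)
  then show ?thesis
    unfolding lfoldl_def using assms(2-4)
    by (intro computable_psnd computable_funpow_param computable_prod_encode)
qed

lemma computable3_lcons: "computable3 (\<lambda>z x acc. lcons x acc)"
  unfolding computable3_def by auto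

lemma foldl_lcons:
  "foldl (\<lambda>acc x. lcons (g x) acc) (list_encode ys) xs = list_encode (rev (map g xs) @ ys)"
  by (induction xs arbitrary: ys) simp_all

definition lrev :: "nat \<Rightarrow> nat" where "lrev l = lfoldl (\<lambda>z x acc. lcons x acc) 0 l 0"

lemma lrev_list_encode [simp]: "lrev (list_encode xs) = list_encode (rev xs)"
  unfolding lrev_def using foldl_lcons[of id "[]" xs] by simp

lemma computable_lrev [intro!]: "computable f \<Longrightarrow> computable (\<lambda>n. lrev (f n))"
  unfolding lrev_def by (intro computable_lfoldl computable3_lcons computable_const)

definition lappend :: "nat \<Rightarrow> nat \<Rightarrow> nat" where
  "lappend l1 l2 = lfoldl (\<lambda>z x acc. lcons x acc) 0 (lrev l1) l2"

lemma lappend_list_encode [simp]: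
  "lappend (list_encode xs) (list_encode ys) = list_encode (xs @ ys)"
  unfolding lappend_def using foldl_lcons[of id ys "rev xs"] by simp

lemma computable_lappend [intro!]:
  "computable f \<Longrightarrow> computable g \<Longrightarrow> computable (\<lambda>n. lappend (f n) (g n))"
  unfolding lappend_def by (intro computable_lfoldl computable3_lcons computable_const computable_lrev)

definition lmap :: "(nat \<Rightarrow> nat \<Rightarrow> nat) \<Rightarrow> nat \<Rightarrow> nat \<Rightarrow> nat" where
  "lmap g z l = lrev (lfoldl (\<lambda>z x acc. lcons (g z x) acc) z l 0)"

lemma lmap_list_encode [simp]: "lmap g z (list_encode xs) = list_encode (map (g z) xs)"
  unfolding lmap_def using foldl_lcons[of "g z" "[]" xs] by simp

lemma computable_lmap [intro]:
  assumes "computable2 g" "computable z" "computable l"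
  shows "computable (\<lambda>n. lmap g (z n) (l n))"
proof -
  have "computable3 (\<lambda>z x acc. lcons (g z x) acc)"
    unfolding computable3_def
    by (intro computable_lcons computable2_apply[OF assms(1)] computable_pfst computable_psnd
        computable_id)
  then show ?thesis
    unfolding lmap_def using assms(2,3) by (intro computable_lrev computable_lfoldl computable_const)
qed

section \<open>Runs of FIFO machines\<close>

fun runs_in :: "(nat \<times> act \<times> nat) set \<Rightarrow> cfg \<Rightarrow> act list \<Rightarrow> cfg \<Rightarrow> bool" where
  "runs_in T c [] c' \<longleftrightarrow> c' = c"
| "runs_in T c (\<alpha> # \<sigma>) c' \<longleftrightarrow>
     (\<exists>c''. (fst c, \<alpha>, fst c'') \<in> T \<and> apply_act \<alpha> (snd c) = Some (snd c'') \<and> runs_in T c'' \<sigma> c')"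

lemma runs_iff_runs_in: "runs M c \<sigma> c' \<longleftrightarrow> runs_in (set (delta M)) c \<sigma> c'"
  by (induction \<sigma> arbitrary: c) (auto simp: step_def)

lemma Reach_iff_runs_in:
  "c \<in> Reach M L \<longleftrightarrow> (\<exists>\<sigma>\<in>L. runs_in (set (delta M)) (init M, replicate (nch M) []) \<sigma> c)"
  by (simp add: Reach_def init_cfg_def runs_iff_runs_in)

lemma runs_in_append:
  "runs_in T c (\<sigma>1 @ \<sigma>2) c' \<longleftrightarrow> (\<exists>c''. runs_in T c \<sigma>1 c'' \<and> runs_in T c'' \<sigma>2 c')"
  by (induction \<sigma>1 arbitrary: c) auto

lemma runs_in_mono: "runs_in T c \<sigma> c' \<Longrightarrow> T \<subseteq> T' \<Longrightarrow> runs_in T' c \<sigma> c'"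
  by (induction \<sigma> arbitrary: c) auto

lemma runs_in_labels: "runs_in T c \<sigma> c' \<Longrightarrow> \<alpha> \<in> set \<sigma> \<Longrightarrow> \<exists>s t. (s, \<alpha>, t) \<in> T"
  by (induction \<sigma> arbitrary: c) auto

lemma wf_runs_actions: "wf_fifo M \<Longrightarrow> runs_in (set (delta M)) c \<sigma> c' \<Longrightarrow> set \<sigma> \<subseteq> actions M"
  by (auto dest!: runs_in_labels simp: wf_fifo_def)

fun chan :: "act \<Rightarrow> nat" where
  "chan (Snd c a) = c"
| "chan (Rcv c a) = c"

fun is_rcv :: "act \<Rightarrow> bool" where
  "is_rcv (Snd c a) = False"
| "is_rcv (Rcv c a) = True"

lemma actions_chan: "\<alpha> \<in> actions M \<Longrightarrow> chan \<alpha> < nch M"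
  by (auto simp: actions_def)

lemma apply_act_length:
  "apply_act \<alpha> ws = Some ws' \<Longrightarrow> length ws' = length ws \<and> chan \<alpha> < length ws"
  by (cases \<alpha>) (auto split: if_splits list.splits)

lemma runs_in_length: "runs_in T c \<sigma> c' \<Longrightarrow> length (snd c') = length (snd c)"
  by (induction \<sigma> arbitrary: c) (auto dest: apply_act_length)

lemma runs_in_receives_only:
  assumes "runs_in T c \<sigma> c'" "fst c \<in> X" "\<forall>(s, \<alpha>, t) \<in> T. s \<in> X \<longrightarrow> is_rcv \<alpha> \<and> t \<in> X"
  shows "\<forall>\<alpha>\<in>set \<sigma>. is_rcv \<alpha>"
  using assms by (induction \<sigma> arbitrary: c) fastforce+

lemma apply_act_append_channels:
  "apply_act \<alpha> ws = Some ws' \<Longrightarrow> apply_act \<alpha> (ws @ vs) = Some (ws' @ vs)"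
  by (cases \<alpha>) (auto split: if_splits list.splits simp: nth_append list_update_append)

lemma runs_in_append_channels:
  "runs_in T (p, ws) \<sigma> (p', ws') \<Longrightarrow> runs_in T (p, ws @ vs) \<sigma> (p', ws' @ vs)"
proof (induction \<sigma> arbitrary: p ws)
  case (Cons \<alpha> \<sigma>)
  then obtain p'' ws'' where "(p, \<alpha>, p'') \<in> T" "apply_act \<alpha> ws = Some ws''"
      "runs_in T (p'', ws'') \<sigma> (p', ws')"
    by auto
  with Cons.IH show ?case by (auto intro!: exI[of _ "(p'', ws'' @ vs)"] apply_act_append_channels)
qed simp

definition keep_channels :: "nat \<Rightarrow> act list \<Rightarrow> act list" where
  "keep_channels n \<sigma> = filter (\<lambda>\<alpha>. chan \<alpha> < n) \<sigma>"

lemma apply_act_take_channels: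
  "apply_act \<alpha> ws = Some ws' \<Longrightarrow> chan \<alpha> < n \<Longrightarrow> apply_act \<alpha> (take n ws) = Some (take n ws')"
  by (cases \<alpha>) (auto split: if_splits list.splits simp: take_update_swap)

lemma apply_act_take_other_channels:
  "apply_act \<alpha> ws = Some ws' \<Longrightarrow> n \<le> chan \<alpha> \<Longrightarrow> take n ws' = take n ws"
  by (cases \<alpha>) (auto split: if_splits list.splits)

lemma runs_in_take_channels:
  assumes "runs_in T (p, ws) \<sigma> (p', ws')"
    and "\<forall>(s, \<alpha>, t) \<in> T. (s, \<alpha>, t) \<in> T0 \<or> (n \<le> chan \<alpha> \<and> s = t)"
    and "\<forall>(s, \<alpha>, t) \<in> T0. chan \<alpha> < n"
  shows "runs_in T0 (p, take n ws) (keep_channels n \<sigma>) (p', take n ws')"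
  using assms(1)
proof (induction \<sigma> arbitrary: p ws)
  case (Cons \<alpha> \<sigma>)
  then obtain p'' ws'' where tr: "(p, \<alpha>, p'') \<in> T" "apply_act \<alpha> ws = Some ws''"
      "runs_in T (p'', ws'') \<sigma> (p', ws')"
    by auto
  note IH = Cons.IH[OF tr(3)]
  show ?case
  proof (cases "chan \<alpha> < n")
    case True
    then have "(p, \<alpha>, p'') \<in> T0" using tr(1) assms(2) by fastforce
    then show ?thesis
      using IH True apply_act_take_channels[OF tr(2) True] by (auto simp: keep_channels_def)
  next
    case False
    then have "p'' = p" using tr(1) assms(2,3) by fastforce
    then show ?thesis
      using IH False apply_act_take_other_channels[OF tr(2)] by (auto simp: keep_channels_def)
  qed
qed (simp add: keep_channels_def)

lemma proj_send_append [simp]: "proj_send c (\<sigma>1 @ \<sigma>2) = proj_send c \<sigma>1 @ proj_send c \<sigma>2"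
  by (induction c \<sigma>1 rule: proj_send.induct) auto

lemma proj_send_keep_channels: "c < n \<Longrightarrow> proj_send c (keep_channels n \<sigma>) = proj_send c \<sigma>"
  unfolding keep_channels_def by (induction c \<sigma> rule: proj_send.induct) auto

lemma proj_send_eq_Nil: "(\<forall>\<alpha>\<in>set \<sigma>. chan \<alpha> \<noteq> c \<or> is_rcv \<alpha>) \<Longrightarrow> proj_send c \<sigma> = []"
  by (induction c \<sigma> rule: proj_send.induct) auto

lemma runs_in_first_exit:
  assumes "runs_in T c \<sigma> c'" "fst c \<in> S" "fst c' \<notin> S"
  shows "\<exists>\<sigma>1 \<alpha> \<sigma>2 c1 c2. \<sigma> = \<sigma>1 @ \<alpha> # \<sigma>2 \<and> runs_in (T \<inter> S \<times> UNIV \<times> S) c \<sigma>1 c1 \<and>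
     fst c1 \<in> S \<and> fst c2 \<notin> S \<and> (fst c1, \<alpha>, fst c2) \<in> T \<and> apply_act \<alpha> (snd c1) = Some (snd c2) \<and>
     runs_in T c2 \<sigma>2 c'"
  using assms
proof (induction \<sigma> arbitrary: c)
  case (Cons \<alpha> \<sigma>)
  then obtain c'' where tr: "(fst c, \<alpha>, fst c'') \<in> T" "apply_act \<alpha> (snd c) = Some (snd c'')"
      "runs_in T c'' \<sigma> c'"
    by auto
  show ?case
  proof (cases "fst c'' \<in> S")
    case True
    from Cons.IH[OF tr(3) True Cons.prems(3)] obtain \<sigma>1 \<beta> \<sigma>2 c1 c2 where
      "\<sigma> = \<sigma>1 @ \<beta> # \<sigma>2" "runs_in (T \<inter> S \<times> UNIV \<times> S) c'' \<sigma>1 c1" "fst c1 \<in> S" "fst c2 \<notin> S"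
      "(fst c1, \<beta>, fst c2) \<in> T" "apply_act \<beta> (snd c1) = Some (snd c2)" "runs_in T c2 \<sigma>2 c'"
      by blast
    with tr True Cons.prems(2) show ?thesis
      by (intro exI[of _ "\<alpha> # \<sigma>1"] exI[of _ \<beta>] exI[of _ \<sigma>2] exI[of _ c1] exI[of _ c2]) auto
  next
    case False
    with tr Cons.prems(2) show ?thesis
      by (intro exI[of _ "[]"] exI[of _ \<alpha>] exI[of _ \<sigma>] exI[of _ c] exI[of _ c'']) auto
  qed
qed simp

lemma apply_act_is_config:
  assumes "apply_act \<alpha> ws = Some ws'" "\<alpha> \<in> actions M" "is_config M (p, ws)" "p' \<in> set (states M)"
  shows "is_config M (p', ws')"
proof (cases \<alpha>)
  case (Rcv c a)
  with assms(1) obtain r where "ws ! c = a # r" "ws' = ws[c := r]" "c < length ws"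
    by (auto split: if_splits list.splits)
  with assms(3,4) show ?thesis
    by (auto simp: is_config_def nth_list_update) (metis list.set_intros(2) subsetD)
next
  case (Snd c a)
  with assms show ?thesis
    by (auto simp: is_config_def actions_def nth_list_update split: if_splits) blast+
qed

lemma runs_is_config:
  "wf_fifo M \<Longrightarrow> runs_in (set (delta M)) c \<sigma> c' \<Longrightarrow> is_config M c \<Longrightarrow> is_config M c'"
proof (induction \<sigma> arbitrary: c)
  case (Cons \<alpha> \<sigma>)
  then obtain c'' where tr: "(fst c, \<alpha>, fst c'') \<in> set (delta M)"
      "apply_act \<alpha> (snd c) = Some (snd c'')" "runs_in (set (delta M)) c'' \<sigma> c'"
    by auto
  have "\<alpha> \<in> actions M" "fst c'' \<in> set (states M)"
    using tr(1) Cons.prems(1) by (auto simp: wf_fifo_def)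
  then have "is_config M c''"
    using apply_act_is_config[OF tr(2)] Cons.prems(3) by (metis prod.collapse)
  then show ?case using Cons.IH Cons.prems(1) tr(3) by blast
qed simp

lemma init_is_config: "wf_fifo M \<Longrightarrow> is_config M (init M, replicate (nch M) [])"
  by (simp add: wf_fifo_def is_config_def)

lemma reachable_is_config:
  "wf_fifo M \<Longrightarrow> runs_in (set (delta M)) (init M, replicate (nch M) []) \<sigma> c \<Longrightarrow> is_config M c"
  using runs_is_config init_is_config by blast

lemma LsendA_iff:
  "\<sigma> \<in> LsendA M As \<longleftrightarrow> set \<sigma> \<subseteq> actions M \<and> (\<forall>c<nch M. proj_send c \<sigma> \<in> nfa_lang (As ! c))"
  by (simp add: LsendA_def Lsend_def)

lemma LsendA_append_receives:
  assumes "\<sigma> \<in> LsendA M As" "set \<rho> \<subseteq> actions M" "\<forall>\<alpha>\<in>set \<rho>. is_rcv \<alpha>"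
  shows "\<sigma> @ \<rho> \<in> LsendA M As"
proof -
  have "proj_send c \<rho> = []" for c
    using assms(3) by (intro proj_send_eq_Nil) auto
  with assms(1,2) show ?thesis by (simp add: LsendA_iff)
qed

section \<open>Adding a fresh channel\<close>

definition nfa_opt0 :: nfa where
  "nfa_opt0 = \<lparr>nstart = [0], ntrans = [(0, 0, 1)], nfinal = [0, 1]\<rparr>"

lemma foldl_nfa_step_empty: "foldl (nfa_step A) {} w = {}"
  by (induction w) (auto simp: nfa_step_def)

lemma nfa_lang_opt0: "nfa_lang nfa_opt0 = {[], [0]}"
proof -
  have step: "nfa_step nfa_opt0 S a = (if 0 \<in> S \<and> a = 0 then {1} else {})" for S a
    by (auto simp: nfa_step_def nfa_opt0_def)
  have ends: "set (nstart nfa_opt0) = {0}" "set (nfinal nfa_opt0) = {0, 1}"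
    by (simp_all add: nfa_opt0_def)
  have "w \<in> nfa_lang nfa_opt0 \<longleftrightarrow> w = [] \<or> w = [0]" for w
  proof (cases w)
    case (Cons a w')
    then show ?thesis
      by (cases w') (auto simp: nfa_lang_def ends step foldl_nfa_step_empty)
  qed (simp add: nfa_lang_def ends)
  then show ?thesis by auto
qed

lemma bounded_lang_opt0: "bounded_lang {[], [0]}"
  unfolding bounded_lang_def
  by (rule exI[of _ "[[0]]"]) (auto intro: exI[of _ "[0]"] exI[of _ "[1]"])

definition add_channel :: "fifo \<Rightarrow> (nat \<times> act \<times> nat) list \<Rightarrow> nat \<Rightarrow> fifo" where
  "add_channel M ts D = \<lparr>states = D # states M, nch = Suc (nch M), alph = alph M @ [[0]],
     delta = ts @ delta M, init = init M\<rparr>"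

lemma actions_add_channel:
  "length (alph M) = nch M \<Longrightarrow>
   actions (add_channel M ts D) = actions M \<union> {Snd (nch M) 0, Rcv (nch M) 0}"
  by (auto simp: actions_def add_channel_def nth_append less_Suc_eq)

lemma LsendA_add_channel:
  assumes "length (alph M) = nch M" "length As = nch M"
  shows "\<sigma> \<in> LsendA (add_channel M ts D) (As @ [nfa_opt0]) \<longleftrightarrow>
    set \<sigma> \<subseteq> actions M \<union> {Snd (nch M) 0, Rcv (nch M) 0} \<and>
    (\<forall>c<nch M. proj_send c \<sigma> \<in> nfa_lang (As ! c)) \<and> proj_send (nch M) \<sigma> \<in> {[], [0]}"
  using assms actions_add_channel[OF assms(1)]
  by (auto simp: LsendA_iff add_channel_def nth_append less_Suc_eq nfa_lang_opt0)

lemma valid_langs_add_channel: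
  "valid_langs M As \<Longrightarrow> length (alph M) = nch M \<Longrightarrow>
   valid_langs (add_channel M ts D) (As @ [nfa_opt0])"
  using bounded_lang_opt0
  by (auto simp: valid_langs_def add_channel_def nth_append less_Suc_eq nfa_lang_opt0)

lemma wf_add_channel:
  assumes "wf_fifo M"
    and "\<forall>(s, \<alpha>, t) \<in> set ts. s \<in> set (D # states M) \<and> t \<in> set (D # states M) \<and>
           \<alpha> \<in> actions M \<union> {Snd (nch M) 0, Rcv (nch M) 0}"
  shows "wf_fifo (add_channel M ts D)"
  using assms actions_add_channel[of M ts D]
  unfolding wf_fifo_def by (auto simp: add_channel_def)

lemma states_less_enc_fifo: "p \<in> set (states M) \<Longrightarrow> p < enc_fifo M"
proof -
  assume "p \<in> set (states M)"
  then have "p < list_encode (states M)" by (rule list_encode_gt_mem)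
  also have "list_encode (states M) < enc_fifo M"
    unfolding enc_fifo_def by (rule list_encode_gt_mem) simp
  finally show ?thesis .
qed

lemma alph_less_enc_fifo: "c < length (alph M) \<Longrightarrow> a \<in> set (alph M ! c) \<Longrightarrow> a < enc_fifo M"
proof -
  assume c: "c < length (alph M)" and a: "a \<in> set (alph M ! c)"
  have "a < list_encode (alph M ! c)"
    using a by (rule list_encode_gt_mem)
  also have "list_encode (alph M ! c) < enc_nll (alph M)"
    unfolding enc_nll_def by (rule list_encode_gt_mem) (use c in auto)
  also have "enc_nll (alph M) < enc_fifo M"
    unfolding enc_fifo_def by (rule list_encode_gt_mem) simp
  finally show ?thesis .
qed

lemma runs_add_channel_iff:
  "runs_in (set (delta (add_channel M ts D))) c \<sigma> c' \<longleftrightarrow> runs_in (set ts \<union> set (delta M)) c \<sigma> c'"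
  by (simp add: add_channel_def)

lemma Reach_add_channel_iff:
  "c \<in> Reach (add_channel M ts D) L \<longleftrightarrow>
   (\<exists>\<sigma>\<in>L. runs_in (set ts \<union> set (delta M)) (init M, replicate (nch M) [] @ [[]]) \<sigma> c)"
  by (simp add: Reach_iff_runs_in runs_add_channel_iff add_channel_def replicate_append_same)

lemma add_channel_forward:
  assumes wf: "wf_fifo M" and lA: "length As = nch M" and tr: "(q, Snd (nch M) 0, D) \<in> set ts"
    and reach: "(q, ws) \<in> Reach M (LsendA M As)"
  obtains \<sigma> where "\<sigma> \<in> LsendA (add_channel M ts D) (As @ [nfa_opt0])"
    "runs_in (set ts \<union> set (delta M)) (init M, replicate (nch M) [] @ [[]]) \<sigma> (D, ws @ [[0]])"
    "is_config M (q, ws)"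
proof -
  let ?n = "nch M" and ?T = "set ts \<union> set (delta M)"
  obtain \<sigma> where \<sigma>: "\<sigma> \<in> LsendA M As" "runs_in (set (delta M)) (init M, replicate ?n []) \<sigma> (q, ws)"
    using reach by (auto simp: Reach_iff_runs_in)
  have cfg: "is_config M (q, ws)" using reachable_is_config[OF wf \<sigma>(2)] .
  then have lw: "length ws = ?n" by (simp add: is_config_def)
  have "runs_in ?T (init M, replicate ?n [] @ [[]]) \<sigma> (q, ws @ [[]])"
    using runs_in_mono[OF runs_in_append_channels[OF \<sigma>(2)]] by blast
  moreover have "runs_in ?T (q, ws @ [[]]) [Snd ?n 0] (D, ws @ [[0]])"
    using tr lw by (auto simp: list_update_append nth_append)
  ultimately have "runs_in ?T (init M, replicate ?n [] @ [[]]) (\<sigma> @ [Snd ?n 0]) (D, ws @ [[0]])"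
    unfolding runs_in_append by blast
  moreover have "\<sigma> @ [Snd ?n 0] \<in> LsendA (add_channel M ts D) (As @ [nfa_opt0])"
  proof -
    have sa: "set \<sigma> \<subseteq> actions M" and pr: "\<forall>c<?n. proj_send c \<sigma> \<in> nfa_lang (As ! c)"
      using \<sigma>(1) by (auto simp: LsendA_iff)
    have "proj_send ?n \<sigma> = []"
      by (rule proj_send_eq_Nil) (use sa actions_chan in fastforce)
    with sa pr show ?thesis
      using wf lA by (auto simp: LsendA_add_channel wf_fifo_def)
  qed
  ultimately show ?thesis using that cfg by blast
qed

lemma add_channel_backward:
  assumes wf: "wf_fifo M" and lA: "length As = nch M"
    and old: "\<forall>(s, \<alpha>, t) \<in> set ts. s \<in> set (states M) \<longrightarrow>
                nch M \<le> chan \<alpha> \<and> (t = s \<or> s = q \<and> t \<notin> set (states M))"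
    and new: "\<forall>(s, \<alpha>, t) \<in> set ts. s \<notin> set (states M) \<longrightarrow> is_rcv \<alpha> \<and> t \<notin> set (states M)"
    and \<sigma>: "\<sigma> \<in> LsendA (add_channel M ts D) (As @ [nfa_opt0])"
      "runs_in (set ts \<union> set (delta M)) (init M, replicate (nch M) [] @ [[]]) \<sigma> c"
    and exit: "fst c \<notin> set (states M)"
  shows "\<exists>ws. (q, ws) \<in> Reach M (LsendA M As)"
proof -
  let ?n = "nch M" and ?S = "set (states M)" and ?T = "set ts \<union> set (delta M)"
  have la: "length (alph M) = ?n" and init: "init M \<in> ?S"
    and olds: "\<forall>(s, \<alpha>, t) \<in> set (delta M). s \<in> ?S \<and> t \<in> ?S \<and> \<alpha> \<in> actions M"
    using wf by (auto simp: wf_fifo_def)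
  obtain \<sigma>1 \<alpha> \<sigma>2 c1 c2 where ex: "\<sigma> = \<sigma>1 @ \<alpha> # \<sigma>2"
      "runs_in (?T \<inter> ?S \<times> UNIV \<times> ?S) (init M, replicate ?n [] @ [[]]) \<sigma>1 c1"
      "fst c1 \<in> ?S" "fst c2 \<notin> ?S" "(fst c1, \<alpha>, fst c2) \<in> ?T" "runs_in ?T c2 \<sigma>2 c"
    using runs_in_first_exit[OF \<sigma>(2) _ exit] init by auto
  have exit_tr: "fst c1 = q" "?n \<le> chan \<alpha>"
    using ex(3-5) old olds by fastforce+
  have "runs_in (set (delta M)) (init M, take ?n (replicate ?n [] @ [[]])) (keep_channels ?n \<sigma>1)
      (fst c1, take ?n (snd c1))"
  proof (rule runs_in_take_channels)
    show "runs_in (?T \<inter> ?S \<times> UNIV \<times> ?S) (init M, replicate ?n [] @ [[]]) \<sigma>1 (fst c1, snd c1)"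
      using ex(2) by simp
    show "\<forall>(s, \<alpha>, t) \<in> ?T \<inter> ?S \<times> UNIV \<times> ?S. (s, \<alpha>, t) \<in> set (delta M) \<or> (?n \<le> chan \<alpha> \<and> s = t)"
      using old by fastforce
    show "\<forall>(s, \<alpha>, t) \<in> set (delta M). chan \<alpha> < ?n"
      using olds actions_chan by fastforce
  qed
  then have run:
      "runs_in (set (delta M)) (init M, replicate ?n []) (keep_channels ?n \<sigma>1) (q, take ?n (snd c1))"
    using exit_tr by simp
  have "\<forall>\<beta>\<in>set \<sigma>2. is_rcv \<beta>"
    by (rule runs_in_receives_only[OF ex(6), of "- ?S"]) (use ex(4) new olds in auto)
  then have "proj_send c (\<alpha> # \<sigma>2) = []" if "c < ?n" for c
    using that exit_tr by (intro proj_send_eq_Nil) auto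
  then have proj: "proj_send c \<sigma> = proj_send c (keep_channels ?n \<sigma>1)" if "c < ?n" for c
    using that ex(1) by (simp add: proj_send_keep_channels)
  have "set \<sigma> \<subseteq> actions M \<union> {Snd ?n 0, Rcv ?n 0}" "\<forall>c<?n. proj_send c \<sigma> \<in> nfa_lang (As ! c)"
    using \<sigma>(1) by (simp_all add: LsendA_add_channel[OF la lA])
  then have "keep_channels ?n \<sigma>1 \<in> LsendA M As"
    using proj ex(1) by (auto simp: LsendA_iff keep_channels_def)
  with run show ?thesis by (auto simp: Reach_iff_runs_in)
qed

section \<open>From control-state reachability to deadlock and to reachability\<close>

definition cs_to_dl_trans :: "fifo \<Rightarrow> nat \<Rightarrow> (nat \<times> act \<times> nat) list" where
  "cs_to_dl_trans M q =
     (q, Snd (nch M) 0, enc_fifo M) # map (\<lambda>p. (p, Snd (nch M) 0, p)) (states M)"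

definition cs_to_dl :: "cs_inst \<Rightarrow> dl_inst" where
  "cs_to_dl i = (case i of (M, As, q) \<Rightarrow>
     (add_channel M (cs_to_dl_trans M q) (enc_fifo M), As @ [nfa_opt0]))"

fun concat_indexed :: "(nat \<Rightarrow> 'a \<Rightarrow> 'b list) \<Rightarrow> nat \<Rightarrow> 'a list \<Rightarrow> 'b list" where
  "concat_indexed F k [] = []"
| "concat_indexed F k (x # xs) = F k x @ concat_indexed F (Suc k) xs"

lemma set_concat_indexed:
  "set (concat_indexed F k xs) = (\<Union>j<length xs. set (F (k + j) (xs ! j)))"
proof (induction xs arbitrary: k)
  case (Cons x xs)
  have "(\<Union>j<length (x # xs). set (F (k + j) ((x # xs) ! j))) =
      set (F k x) \<union> (\<Union>j<length xs. set (F (Suc k + j) (xs ! j)))"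
    by (auto simp: lessThan_Suc_eq_insert_0 image_Suc_lessThan[symmetric])
  with Cons show ?case by simp
qed simp

definition drain_loops :: "nat \<Rightarrow> nat list list \<Rightarrow> (nat \<times> act \<times> nat) list" where
  "drain_loops E als = concat_indexed (\<lambda>c l. map (\<lambda>a. (E, Rcv c a, E)) l) 0 als"

lemma set_drain_loops:
  "set (drain_loops E als) = {(E, Rcv c a, E) | c a. c < length als \<and> a \<in> set (als ! c)}"
  by (auto simp: drain_loops_def set_concat_indexed)

lemma runs_in_receive_word:
  assumes "c < length vs" "vs ! c = w @ r" "\<forall>a\<in>set w. (E, Rcv c a, E) \<in> T"
  shows "runs_in T (E, vs) (map (Rcv c) w) (E, vs[c := r])"
  using assms
proof (induction w arbitrary: vs)
  case (Cons a w)
  have "runs_in T (E, vs[c := w @ r]) (map (Rcv c) w) (E, (vs[c := w @ r])[c := r])"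
    by (rule Cons.IH) (use Cons.prems in auto)
  with Cons.prems show ?case by (auto intro!: exI[of _ "(E, vs[c := w @ r])"])
qed (simp, metis list_update_id)

lemma runs_in_drain:
  assumes "m \<le> length vs" "\<forall>c<m. \<forall>a\<in>set (vs ! c). (E, Rcv c a, E) \<in> T"
  shows "\<exists>\<rho>. runs_in T (E, vs) \<rho> (E, replicate m [] @ drop m vs) \<and> (\<forall>\<alpha>\<in>set \<rho>. is_rcv \<alpha>)"
  using assms
proof (induction m)
  case (Suc m)
  then obtain \<rho> where \<rho>: "runs_in T (E, vs) \<rho> (E, replicate m [] @ drop m vs)" "\<forall>\<alpha>\<in>set \<rho>. is_rcv \<alpha>"
    by auto
  let ?u = "replicate m [] @ drop m vs"
  have m: "m < length vs" using Suc.prems by simp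
  have "runs_in T (E, ?u) (map (Rcv m) (vs ! m)) (E, ?u[m := []])"
    by (rule runs_in_receive_word) (use m Suc.prems in \<open>auto simp: nth_append\<close>)
  moreover have "?u[m := []] = replicate (Suc m) [] @ drop (Suc m) vs"
    using m by (simp add: list_update_append Cons_nth_drop_Suc[symmetric] replicate_append_same)
  ultimately have "runs_in T (E, vs) (\<rho> @ map (Rcv m) (vs ! m)) (E, replicate (Suc m) [] @ drop (Suc m) vs)"
    using \<rho>(1) runs_in_append by metis
  with \<rho>(2) show ?case by (intro exI[of _ "\<rho> @ map (Rcv m) (vs ! m)"]) auto
qed (auto intro: exI[of _ "[]"])

definition cs_to_reach_trans :: "fifo \<Rightarrow> nat \<Rightarrow> (nat \<times> act \<times> nat) list" where
  "cs_to_reach_trans M q =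
     (q, Snd (nch M) 0, enc_fifo M) # drain_loops (enc_fifo M) (alph M @ [[0]])"

definition cs_to_reach :: "cs_inst \<Rightarrow> reach_inst" where
  "cs_to_reach i = (case i of (M, As, q) \<Rightarrow>
     (add_channel M (cs_to_reach_trans M q) (enc_fifo M), As @ [nfa_opt0],
      (enc_fifo M, replicate (Suc (nch M)) [])))"

locale cs_instance =
  fixes M :: fifo and As :: "nfa list" and q :: nat
  assumes valid: "valid_cs (M, As, q)"
begin

lemma wf: "wf_fifo M" and vl: "valid_langs M As" and q: "q \<in> set (states M)"
  using valid by (auto simp: valid_cs_def)

lemma la: "length (alph M) = nch M" and lA: "length As = nch M"
  and olds: "\<forall>(s, \<alpha>, t) \<in> set (delta M). s \<in> set (states M) \<and> t \<in> set (states M)"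
  using wf vl by (auto simp: wf_fifo_def valid_langs_def)

lemma fresh: "enc_fifo M \<notin> set (states M)"
  using states_less_enc_fifo by blast

abbreviation "D \<equiv> enc_fifo M"
abbreviation "Mdl \<equiv> add_channel M (cs_to_dl_trans M q) D"
abbreviation "Mreach \<equiv> add_channel M (cs_to_reach_trans M q) D"

lemma dl_valid: "valid_dl (cs_to_dl (M, As, q))"
  using wf_add_channel[OF wf, of "cs_to_dl_trans M q" D] valid_langs_add_channel[OF vl la] q
  by (auto simp: cs_to_dl_def valid_dl_def cs_to_dl_trans_def)

lemma dl_forward:
  assumes "IB_cs_reach (M, As, q)"
  shows "IB_deadlock (cs_to_dl (M, As, q))"
proof -
  obtain ws where "(q, ws) \<in> Reach M (LsendA M As)"
    using assms by (auto simp: IB_cs_reach_def)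
  moreover have "(q, Snd (nch M) 0, D) \<in> set (cs_to_dl_trans M q)"
    by (simp add: cs_to_dl_trans_def)
  ultimately obtain \<sigma> where "\<sigma> \<in> LsendA Mdl (As @ [nfa_opt0])"
    "runs_in (set (cs_to_dl_trans M q) \<union> set (delta M)) (init M, replicate (nch M) [] @ [[]]) \<sigma>
       (D, ws @ [[0]])"
    using add_channel_forward[OF wf lA] by blast
  then have "(D, ws @ [[0]]) \<in> Reach Mdl (LsendA Mdl (As @ [nfa_opt0]))"
    unfolding Reach_add_channel_iff by blast
  moreover have "deadlock Mdl (D, ws @ [[0]])"
    using fresh q olds by (fastforce simp: deadlock_def step_def add_channel_def cs_to_dl_trans_def)
  ultimately show ?thesis
    by (auto simp: IB_deadlock_def cs_to_dl_def)
qed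

lemma dl_backward:
  assumes "IB_deadlock (cs_to_dl (M, As, q))"
  shows "IB_cs_reach (M, As, q)"
proof -
  obtain s \<sigma> where \<sigma>: "\<sigma> \<in> LsendA Mdl (As @ [nfa_opt0])"
      "runs_in (set (cs_to_dl_trans M q) \<union> set (delta M)) (init M, replicate (nch M) [] @ [[]]) \<sigma> s"
    and dl: "deadlock Mdl s"
    using assms by (auto simp: IB_deadlock_def cs_to_dl_def Reach_add_channel_iff)
  have "fst s \<notin> set (states M)"
  proof
    assume "fst s \<in> set (states M)"
    moreover have "length (snd s) = Suc (nch M)"
      using runs_in_length[OF \<sigma>(2)] by simp
    ultimately have "step Mdl s (Snd (nch M) 0) (fst s, (snd s)[nch M := snd s ! nch M @ [0]])"
      by (auto simp: step_def add_channel_def cs_to_dl_trans_def)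
    with dl show False by (auto simp: deadlock_def)
  qed
  moreover have "\<forall>(s, \<alpha>, t) \<in> set (cs_to_dl_trans M q). s \<in> set (states M) \<longrightarrow>
      nch M \<le> chan \<alpha> \<and> (t = s \<or> s = q \<and> t \<notin> set (states M))"
    using fresh by (auto simp: cs_to_dl_trans_def)
  moreover have "\<forall>(s, \<alpha>, t) \<in> set (cs_to_dl_trans M q). s \<notin> set (states M) \<longrightarrow>
      is_rcv \<alpha> \<and> t \<notin> set (states M)"
    using q by (auto simp: cs_to_dl_trans_def)
  ultimately show ?thesis
    using add_channel_backward[OF wf lA _ _ \<sigma>] by (auto simp: IB_cs_reach_def)
qed

lemma set_cs_to_reach_trans:
  "set (cs_to_reach_trans M q) = {(q, Snd (nch M) 0, D)} \<union>
     {(D, Rcv c a, D) | c a. c < Suc (nch M) \<and> a \<in> set ((alph M @ [[0]]) ! c)}"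
  by (auto simp: cs_to_reach_trans_def set_drain_loops la)

lemma wf_Mreach: "wf_fifo Mreach"
  using q by (intro wf_add_channel[OF wf]) (auto simp: set_cs_to_reach_trans actions_def nth_append
      less_Suc_eq la)

lemma reach_valid: "valid_reach (cs_to_reach (M, As, q))"
  using wf_Mreach valid_langs_add_channel[OF vl la]
  by (auto simp: cs_to_reach_def valid_reach_def is_config_def add_channel_def simp del: replicate.simps)

lemma reach_forward:
  assumes "IB_cs_reach (M, As, q)"
  shows "IB_reach (cs_to_reach (M, As, q))"
proof -
  let ?T = "set (cs_to_reach_trans M q) \<union> set (delta M)"
  obtain ws where "(q, ws) \<in> Reach M (LsendA M As)"
    using assms by (auto simp: IB_cs_reach_def)
  moreover have "(q, Snd (nch M) 0, D) \<in> set (cs_to_reach_trans M q)"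
    by (simp add: cs_to_reach_trans_def)
  ultimately obtain \<sigma> where \<sigma>: "\<sigma> \<in> LsendA Mreach (As @ [nfa_opt0])"
      "runs_in ?T (init M, replicate (nch M) [] @ [[]]) \<sigma> (D, ws @ [[0]])"
    and cfg: "is_config M (q, ws)"
    using add_channel_forward[OF wf lA] by blast
  have lw: "length ws = nch M"
    using cfg by (simp add: is_config_def)
  have "\<exists>\<rho>. runs_in ?T (D, ws @ [[0]]) \<rho> (D, replicate (Suc (nch M)) [] @ drop (Suc (nch M)) (ws @ [[0]])) \<and>
      (\<forall>\<alpha>\<in>set \<rho>. is_rcv \<alpha>)"
    by (rule runs_in_drain)
      (use cfg lw in \<open>auto simp: set_cs_to_reach_trans is_config_def nth_append less_Suc_eq la\<close>)
  then obtain \<rho> where \<rho>: "runs_in ?T (D, ws @ [[0]]) \<rho> (D, replicate (Suc (nch M)) [])"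
      "\<forall>\<alpha>\<in>set \<rho>. is_rcv \<alpha>"
    using lw by auto
  have "set \<rho> \<subseteq> actions Mreach"
    using wf_runs_actions[OF wf_Mreach] \<rho>(1) by (simp add: runs_add_channel_iff)
  then have "\<sigma> @ \<rho> \<in> LsendA Mreach (As @ [nfa_opt0])"
    using LsendA_append_receives \<sigma>(1) \<rho>(2) by blast
  moreover have "runs_in ?T (init M, replicate (nch M) [] @ [[]]) (\<sigma> @ \<rho>) (D, replicate (Suc (nch M)) [])"
    using \<sigma>(2) \<rho>(1) runs_in_append by blast
  ultimately show ?thesis
    by (auto simp: IB_reach_def cs_to_reach_def Reach_add_channel_iff)
qed

lemma reach_backward:
  assumes "IB_reach (cs_to_reach (M, As, q))"
  shows "IB_cs_reach (M, As, q)"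
proof -
  obtain \<sigma> where \<sigma>: "\<sigma> \<in> LsendA Mreach (As @ [nfa_opt0])"
      "runs_in (set (cs_to_reach_trans M q) \<union> set (delta M)) (init M, replicate (nch M) [] @ [[]]) \<sigma>
         (D, replicate (Suc (nch M)) [])"
    using assms by (auto simp: IB_reach_def cs_to_reach_def Reach_add_channel_iff)
  moreover have "\<forall>(s, \<alpha>, t) \<in> set (cs_to_reach_trans M q). s \<in> set (states M) \<longrightarrow>
      nch M \<le> chan \<alpha> \<and> (t = s \<or> s = q \<and> t \<notin> set (states M))"
    using fresh by (auto simp: set_cs_to_reach_trans)
  moreover have "\<forall>(s, \<alpha>, t) \<in> set (cs_to_reach_trans M q). s \<notin> set (states M) \<longrightarrow>
      is_rcv \<alpha> \<and> t \<notin> set (states M)"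
    using q fresh by (auto simp: set_cs_to_reach_trans)
  ultimately show ?thesis
    using add_channel_backward[OF wf lA] fresh by (auto simp: IB_cs_reach_def)
qed

end

lemma cs_to_dl_correct:
  assumes "valid_cs i"
  shows "valid_dl (cs_to_dl i) \<and> (IB_cs_reach i \<longleftrightarrow> IB_deadlock (cs_to_dl i))"
proof -
  obtain M As q where i: "i = (M, As, q)" by (cases i)
  interpret cs_instance M As q
    using assms by unfold_locales (simp add: i)
  show ?thesis
    using dl_valid dl_forward dl_backward by (auto simp: i)
qed

lemma cs_to_reach_correct:
  assumes "valid_cs i"
  shows "valid_reach (cs_to_reach i) \<and> (IB_cs_reach i \<longleftrightarrow> IB_reach (cs_to_reach i))"
proof -
  obtain M As q where i: "i = (M, As, q)" by (cases i)
  interpret cs_instance M As q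
    using assms by unfold_locales (simp add: i)
  show ?thesis
    using reach_valid reach_forward reach_backward by (auto simp: i)
qed

section \<open>From reachability to control-state reachability\<close>

text \<open>The code of \<open>A\<close> exceeds every state occurring in \<open>A\<close>, so it serves as a fresh final state.\<close>

definition nfa_snoc :: "nat \<Rightarrow> nfa \<Rightarrow> nfa" where
  "nfa_snoc h A = \<lparr>nstart = nstart A,
     ntrans = map (\<lambda>f. (f, h, enc_nfa A)) (nfinal A) @ ntrans A, nfinal = [enc_nfa A]\<rparr>"

definition enc_ntrans :: "nat \<times> nat \<times> nat \<Rightarrow> nat" where
  "enc_ntrans = (\<lambda>(q, a, q'). prod_encode (q, prod_encode (a, q')))"

lemma enc_nfa_eq:
  "enc_nfa A = list_encode [list_encode (nstart A), list_encode (map enc_ntrans (ntrans A)),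
     list_encode (nfinal A)]"
  by (simp add: enc_nfa_def enc_ntrans_def)

lemma enc_nfa_fresh:
  "enc_nfa A \<notin> set (nstart A)" "enc_nfa A \<notin> set (nfinal A)"
  "\<forall>(s, a, t) \<in> set (ntrans A). s \<noteq> enc_nfa A \<and> t \<noteq> enc_nfa A"
proof -
  have parts: "list_encode (nstart A) < enc_nfa A" "list_encode (nfinal A) < enc_nfa A"
    "list_encode (map enc_ntrans (ntrans A)) < enc_nfa A"
    unfolding enc_nfa_eq by (rule list_encode_gt_mem; simp)+
  show "enc_nfa A \<notin> set (nstart A)" "enc_nfa A \<notin> set (nfinal A)"
    using parts(1,2) list_encode_gt_mem less_asym by blast+
  show "\<forall>(s, a, t) \<in> set (ntrans A). s \<noteq> enc_nfa A \<and> t \<noteq> enc_nfa A"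
  proof (clarify)
    fix s a t assume "(s, a, t) \<in> set (ntrans A)"
    then have "enc_ntrans (s, a, t) \<in> set (map enc_ntrans (ntrans A))"
      by force
    then have "enc_ntrans (s, a, t) < enc_nfa A"
      using list_encode_gt_mem parts(3) less_trans by blast
    moreover have "s \<le> enc_ntrans (s, a, t)"
      by (simp add: enc_ntrans_def le_prod_encode_1)
    moreover have "t \<le> enc_ntrans (s, a, t)"
      using le_prod_encode_2[of t a] le_prod_encode_2[of "prod_encode (a, t)" s]
      by (simp add: enc_ntrans_def)
    ultimately show "s \<noteq> enc_nfa A \<and> t \<noteq> enc_nfa A" by auto
  qed
qed

lemma nfa_lang_snoc: "nfa_lang (nfa_snoc h A) = {u @ [h] | u. u \<in> nfa_lang A}"
proof -
  let ?F = "enc_nfa A" and ?s' = "nfa_step (nfa_snoc h A)" and ?s = "nfa_step A"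
  note fresh = enc_nfa_fresh[of A]
  have step: "?s' S a = ?s S a \<union> (if a = h \<and> S \<inter> set (nfinal A) \<noteq> {} then {?F} else {})" for S a
    by (auto simp: nfa_step_def nfa_snoc_def)
  have step_fresh: "?s S a = ?s (S - {?F}) a" "?F \<notin> ?s S a" for S a
    using fresh(3) by (auto simp: nfa_step_def)
  have run: "foldl ?s' S w - {?F} = foldl ?s (S - {?F}) w" for S w
  proof (induction w arbitrary: S)
    case (Cons a w)
    have "?s' S a - {?F} = ?s (S - {?F}) a" using step step_fresh by auto
    with Cons.IH[of "?s' S a"] show ?case by simp
  qed simp
  have last: "?F \<in> foldl ?s' S (w @ [a]) \<longleftrightarrow> a = h \<and> foldl ?s (S - {?F}) w \<inter> set (nfinal A) \<noteq> {}"
    for S w a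
  proof -
    have "foldl ?s' S w \<inter> set (nfinal A) = (foldl ?s' S w - {?F}) \<inter> set (nfinal A)"
      using fresh(2) by auto
    then show ?thesis using step step_fresh run by auto
  qed
  have "w \<in> nfa_lang (nfa_snoc h A) \<longleftrightarrow> (\<exists>u. w = u @ [h] \<and> u \<in> nfa_lang A)" for w
  proof (cases w rule: rev_cases)
    case (snoc u a)
    have "set (nstart A) - {?F} = set (nstart A)" using fresh(1) by auto
    then show ?thesis
      using snoc last[of "set (nstart A)" u a] by (auto simp: nfa_lang_def nfa_snoc_def)
  qed (use fresh(1) in \<open>auto simp: nfa_lang_def nfa_snoc_def\<close>)
  then show ?thesis by auto
qed

lemma bounded_lang_snoc: "bounded_lang L \<Longrightarrow> bounded_lang {u @ [h] | u. u \<in> L}"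
proof -
  assume "bounded_lang L"
  then obtain ws where ws: "\<forall>w\<in>set ws. w \<noteq> []"
    "\<forall>u\<in>L. \<exists>ks. length ks = length ws \<and> u = concat (map (\<lambda>(w, k). concat (replicate k w)) (zip ws ks))"
    unfolding bounded_lang_def by blast
  show ?thesis unfolding bounded_lang_def
  proof (intro exI[of _ "ws @ [[h]]"] conjI ballI)
    show "w \<noteq> []" if "w \<in> set (ws @ [[h]])" for w
      using that ws(1) by auto
    fix u' assume "u' \<in> {u @ [h] |u. u \<in> L}"
    then obtain u ks where "u' = u @ [h]" "length ks = length ws"
      "u = concat (map (\<lambda>(w, k). concat (replicate k w)) (zip ws ks))"
      using ws(2) by blast
    then show "\<exists>ks. length ks = length (ws @ [[h]]) \<and>
        u' = concat (map (\<lambda>(w, k). concat (replicate k w)) (zip (ws @ [[h]]) ks))"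
      by (intro exI[of _ "ks @ [1]"]) simp
  qed
qed

fun apply_acts :: "act list \<Rightarrow> nat list list \<Rightarrow> nat list list option" where
  "apply_acts [] v = Some v"
| "apply_acts (\<alpha> # \<sigma>) v = (case apply_act \<alpha> v of None \<Rightarrow> None | Some u \<Rightarrow> apply_acts \<sigma> u)"

lemma apply_acts_append:
  "apply_acts (\<sigma>1 @ \<sigma>2) v = (case apply_acts \<sigma>1 v of None \<Rightarrow> None | Some u \<Rightarrow> apply_acts \<sigma>2 u)"
  by (induction \<sigma>1 arbitrary: v) (auto split: option.splits)

lemma apply_acts_receive_word:
  "c < length v \<Longrightarrow> v ! c = w @ r \<Longrightarrow> apply_acts (map (Rcv c) w) v = Some (v[c := r])"
proof (induction w arbitrary: v)
  case (Cons a w)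
  then show ?case using Cons.IH[of "v[c := w @ r]"] by auto
qed (simp, metis list_update_id)

lemma apply_acts_receive_wordD:
  "apply_acts (map (Rcv c) w) v = Some v' \<Longrightarrow> c < length v \<Longrightarrow> \<exists>r. v ! c = w @ r \<and> v' = v[c := r]"
proof (induction w arbitrary: v)
  case (Cons a w)
  then obtain u where u: "apply_act (Rcv c a) v = Some u" "apply_acts (map (Rcv c) w) u = Some v'"
    by (auto split: option.splits)
  then obtain r where r: "v ! c = a # r" "u = v[c := r]"
    using Cons.prems(2) by (auto split: if_splits list.splits)
  with Cons.IH[OF u(2)] Cons.prems(2) show ?case by auto
qed simp

definition check_channel :: "nat \<Rightarrow> nat \<Rightarrow> nat list \<Rightarrow> act list" where
  "check_channel h k w = Snd k h # map (Rcv k) w @ [Rcv k h]"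

lemma snoc_eq_marker:
  "x @ [h] = w @ h # r \<Longrightarrow> h \<notin> set x \<Longrightarrow> h \<notin> set w \<Longrightarrow> x = w \<and> r = []"
proof (induction x arbitrary: w)
  case Nil
  then show ?case by (cases w) auto
next
  case (Cons a x)
  then show ?case by (cases w) auto
qed

lemma apply_check_channel:
  "c < length v \<Longrightarrow> v ! c = w \<Longrightarrow> apply_acts (check_channel h c w) v = Some (v[c := []])"
  using apply_acts_receive_word[of c "v[c := w @ [h]]" w "[h]"]
  by (simp add: check_channel_def apply_acts_append)

lemma apply_check_channelD:
  assumes "apply_acts (check_channel h c w) v = Some v'" "h \<notin> set (v ! c)" "h \<notin> set w"
  shows "c < length v \<and> v ! c = w \<and> v' = v[c := []]"
proof -
  from assms(1) have c: "c < length v"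
    by (auto simp: check_channel_def split: if_splits)
  let ?u = "v[c := v ! c @ [h]]"
  from assms(1) c obtain u' where u': "apply_acts (map (Rcv c) w) ?u = Some u'"
      "apply_acts [Rcv c h] u' = Some v'"
    by (auto simp: check_channel_def apply_acts_append split: option.splits)
  from apply_acts_receive_wordD[OF u'(1)] c obtain r where r: "v ! c @ [h] = w @ r" "u' = ?u[c := r]"
    by auto
  from u'(2) r c obtain r' where r': "r = h # r'" "v' = ?u[c := r']"
    by (auto split: list.splits if_splits)
  from snoc_eq_marker[of "v ! c" h w r'] r r' assms(2,3) have "v ! c = w" "r' = []"
    by auto
  with c r' show ?thesis by simp
qed

definition check_channels :: "nat \<Rightarrow> nat \<Rightarrow> nat list list \<Rightarrow> act list" where
  "check_channels h k ws = concat_indexed (check_channel h) k ws"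

lemma check_channels_simps [simp]:
  "check_channels h k [] = []"
  "check_channels h k (w # ws) = check_channel h k w @ check_channels h (Suc k) ws"
  by (simp_all add: check_channels_def)

lemma apply_check_channels:
  "\<forall>j<length ws. k + j < length v \<and> v ! (k + j) = ws ! j \<Longrightarrow>
   \<exists>v'. apply_acts (check_channels h k ws) v = Some v'"
proof (induction ws arbitrary: k v)
  case (Cons w ws)
  have "apply_acts (check_channel h k w) v = Some (v[k := []])"
    by (rule apply_check_channel) (use Cons.prems in force)+
  moreover have "\<exists>v'. apply_acts (check_channels h (Suc k) ws) (v[k := []]) = Some v'"
    by (rule Cons.IH) (use Cons.prems in \<open>force simp: nth_list_update\<close>)
  ultimately show ?case by (simp add: apply_acts_append)
qed simp

lemma apply_check_channelsD:
  "apply_acts (check_channels h k ws) v = Some v' \<Longrightarrow>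
   \<forall>j<length ws. h \<notin> set (ws ! j) \<and> (k + j < length v \<longrightarrow> h \<notin> set (v ! (k + j))) \<Longrightarrow>
   \<forall>j<length ws. k + j < length v \<and> v ! (k + j) = ws ! j"
proof (induction ws arbitrary: k v)
  case (Cons w ws)
  from Cons.prems(1) obtain u where u: "apply_acts (check_channel h k w) v = Some u"
      "apply_acts (check_channels h (Suc k) ws) u = Some v'"
    by (auto simp: apply_acts_append split: option.splits)
  have k: "k < length v"
    using u(1) by (auto simp: check_channel_def split: if_splits)
  from apply_check_channelD[OF u(1)] Cons.prems(2) k have g: "v ! k = w" "u = v[k := []]"
    by force+
  have IH: "\<forall>j<length ws. Suc k + j < length u \<and> u ! (Suc k + j) = ws ! j"
    by (rule Cons.IH[OF u(2)]) (use Cons.prems(2) g in \<open>force simp: nth_list_update\<close>)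
  show ?case
  proof (intro allI impI)
    fix j assume "j < length (w # ws)"
    with IH g k show "k + j < length v \<and> v ! (k + j) = (w # ws) ! j"
      by (cases j) (auto simp: nth_list_update)
  qed
qed simp

lemma proj_send_check_channels:
  "proj_send c (check_channels h k ws) = (if k \<le> c \<and> c < k + length ws then [h] else [])"
proof (induction ws arbitrary: k)
  case (Cons w ws)
  have "proj_send c (check_channel h k w) = (if c = k then [h] else [])"
    unfolding check_channel_def by (induction w) auto
  with Cons show ?case by auto
qed simp

lemma set_check_channels:
  "set (check_channels h k ws) =
     (\<Union>j<length ws. {Snd (k + j) h, Rcv (k + j) h} \<union> Rcv (k + j) ` set (ws ! j))"
  by (auto simp: check_channels_def set_concat_indexed check_channel_def)

lemma check_channels_eq_Nil: "check_channels h k ws = [] \<longleftrightarrow> ws = []"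
  by (cases ws) (auto simp: check_channel_def)

definition chain :: "nat \<Rightarrow> nat \<Rightarrow> act list \<Rightarrow> (nat \<times> act \<times> nat) list" where
  "chain q B acts = concat_indexed (\<lambda>i \<alpha>. [(if i = 0 then q else B + i, \<alpha>, B + Suc i)]) 0 acts"

lemma set_chain:
  "set (chain q B acts) = {(if i = 0 then q else B + i, acts ! i, B + Suc i) | i. i < length acts}"
proof -
  have "set (chain q B acts) = (\<lambda>i. (if i = 0 then q else B + i, acts ! i, B + Suc i)) ` {..<length acts}"
    unfolding chain_def set_concat_indexed by (simp add: UNION_singleton_eq_range cong: if_cong)
  then show ?thesis by blast
qed

lemma runs_in_chain:
  assumes "set (chain q B acts) \<subseteq> T"
  shows "i \<le> length acts \<Longrightarrow> apply_acts (drop i acts) v = Some v' \<Longrightarrow>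
    runs_in T (if i = 0 then q else B + i, v) (drop i acts) (if acts = [] then q else B + length acts, v')"
proof (induction "length acts - i" arbitrary: i v)
  case (Suc x)
  then have i: "i < length acts" by simp
  then have d: "drop i acts = acts ! i # drop (Suc i) acts"
    by (simp add: Cons_nth_drop_Suc)
  from Suc.prems(2) obtain u where u: "apply_act (acts ! i) v = Some u"
      "apply_acts (drop (Suc i) acts) u = Some v'"
    unfolding d by (auto split: option.splits)
  have "(if i = 0 then q else B + i, acts ! i, B + Suc i) \<in> T"
    using assms i by (auto simp: set_chain)
  moreover have
    "runs_in T (B + Suc i, u) (drop (Suc i) acts) (if acts = [] then q else B + length acts, v')"
    using Suc.hyps(1)[of "Suc i" u] Suc.hyps(2) i u(2) by simp
  ultimately show ?case
    unfolding d using u(1) by (auto intro!: exI[of _ "(B + Suc i, u)"])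
qed auto

lemma runs_in_chainD:
  assumes T: "T = set (chain q B acts) \<union> T0" and T0: "\<forall>(s, \<alpha>, t) \<in> T0. s < B" and q: "q < B"
  shows "runs_in T (B + i, u) \<sigma> (B + length acts, v) \<Longrightarrow> 1 \<le> i \<Longrightarrow> i \<le> length acts \<Longrightarrow>
    \<sigma> = drop i acts \<and> apply_acts \<sigma> u = Some v"
proof (induction \<sigma> arbitrary: i u)
  case (Cons \<alpha> \<sigma>)
  then obtain c'' where c'': "(B + i, \<alpha>, fst c'') \<in> T" "apply_act \<alpha> u = Some (snd c'')"
      "runs_in T c'' \<sigma> (B + length acts, v)"
    by auto
  from c''(1) T0 q obtain j where j: "j < length acts" "(if j = 0 then q else B + j) = B + i"
      "\<alpha> = acts ! j" "fst c'' = B + Suc j"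
    unfolding T set_chain by fastforce
  have ji: "j = i"
    using j(2) q Cons.prems(2) by (auto split: if_splits)
  have "runs_in T (B + Suc i, snd c'') \<sigma> (B + length acts, v)"
    using c''(3) j(4) ji by (metis prod.collapse)
  from Cons.IH[OF this] have "\<sigma> = drop (Suc i) acts \<and> apply_acts \<sigma> (snd c'') = Some v"
    using j(1) ji by auto
  moreover have "drop i acts = acts ! i # drop (Suc i) acts"
    using ji j by (simp add: Cons_nth_drop_Suc)
  ultimately show ?case
    using ji j c''(2) by auto
qed auto

text \<open>The chain runs through the fresh states \<open>enc_fifo M + 1, enc_fifo M + 2, \<dots>\<close>, and its last
  state is the target control state.\<close>

definition checker_trans :: "fifo \<Rightarrow> nat \<Rightarrow> nat list list \<Rightarrow> (nat \<times> act \<times> nat) list" where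
  "checker_trans M q ws = chain q (enc_fifo M) (check_channels (enc_fifo M) 0 ws)"

definition add_checker :: "fifo \<Rightarrow> nat \<Rightarrow> nat list list \<Rightarrow> fifo" where
  "add_checker M q ws = \<lparr>states = map (\<lambda>(s, \<alpha>, t). t) (checker_trans M q ws) @ states M,
     nch = nch M, alph = map (\<lambda>l. enc_fifo M # l) (alph M),
     delta = checker_trans M q ws @ delta M, init = init M\<rparr>"

definition checker_target :: "fifo \<Rightarrow> nat \<Rightarrow> nat list list \<Rightarrow> nat" where
  "checker_target M q ws =
     (if ws = [] then q else enc_fifo M + length (check_channels (enc_fifo M) 0 ws))"

definition reach_to_cs :: "reach_inst \<Rightarrow> cs_inst" where
  "reach_to_cs i = (case i of (M, As, (q, ws)) \<Rightarrow>
     (add_checker M q ws, map (nfa_snoc (enc_fifo M)) As, checker_target M q ws))"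

locale reach_instance =
  fixes M :: fifo and As :: "nfa list" and q :: nat and ws :: "nat list list"
  assumes valid: "valid_reach (M, As, (q, ws))"
begin

abbreviation "marker \<equiv> enc_fifo M"
abbreviation "checks \<equiv> check_channels marker 0 ws"
abbreviation "M' \<equiv> add_checker M q ws"
abbreviation "As' \<equiv> map (nfa_snoc marker) As"

lemma wf: "wf_fifo M" and vl: "valid_langs M As" and cfg: "is_config M (q, ws)"
  using valid by (auto simp: valid_reach_def)

lemma q: "q \<in> set (states M)" and lw: "length ws = nch M"
  and ws_alph: "\<forall>c<nch M. set (ws ! c) \<subseteq> set (alph M ! c)"
  using cfg by (auto simp: is_config_def)

lemma la: "length (alph M) = nch M" and lA: "length As = nch M"
  and init: "init M \<in> set (states M)"
  and olds: "\<forall>(s, \<alpha>, t) \<in> set (delta M). s \<in> set (states M) \<and> t \<in> set (states M) \<and> \<alpha> \<in> actions M"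
  using wf vl by (auto simp: wf_fifo_def valid_langs_def)

lemma state_less_marker: "p \<in> set (states M) \<Longrightarrow> p < marker"
  by (rule states_less_enc_fifo)

lemma marker_notin_alph: "c < nch M \<Longrightarrow> marker \<notin> set (alph M ! c)"
  using alph_less_enc_fifo[of _ M marker] la by (metis less_irrefl)

lemma delta': "set (delta M') = set (checker_trans M q ws) \<union> set (delta M)"
  by (simp add: add_checker_def)

lemma actions':
  "actions M' = {Snd c a | c a. c < nch M \<and> a \<in> set (marker # alph M ! c)} \<union>
     {Rcv c a | c a. c < nch M \<and> a \<in> set (marker # alph M ! c)}"
  by (auto simp: actions_def add_checker_def la)

lemma actions_subset: "actions M \<subseteq> actions M'"
  unfolding actions' by (auto simp: actions_def)

lemma checks_actions: "set checks \<subseteq> actions M'"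
  using lw ws_alph by (force simp: set_check_channels actions')

lemma proj_send_checks: "c < nch M \<Longrightarrow> proj_send c checks = [marker]"
  using lw by (simp add: proj_send_check_channels)

lemma LsendA':
  "\<sigma> \<in> LsendA M' As' \<longleftrightarrow>
     set \<sigma> \<subseteq> actions M' \<and> (\<forall>c<nch M. proj_send c \<sigma> \<in> {u @ [marker] | u. u \<in> nfa_lang (As ! c)})"
  using lA by (simp add: LsendA_iff add_checker_def nfa_lang_snoc)

lemma init_nch_M': "init M' = init M" "nch M' = nch M"
  by (simp_all add: add_checker_def)

lemma chain_target_in_states:
  assumes "i < length checks"
  shows "marker + Suc i \<in> set (states M')"
proof -
  have "(if i = 0 then q else marker + i, checks ! i, marker + Suc i) \<in> set (checker_trans M q ws)"
    unfolding checker_trans_def set_chain using assms by blast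
  then have "marker + Suc i \<in> (\<lambda>(s, \<alpha>, t). t) ` set (checker_trans M q ws)"
    by (metis (no_types, lifting) case_prod_conv image_eqI)
  then show ?thesis by (simp add: add_checker_def)
qed

lemma wf': "wf_fifo M'"
proof -
  have "s \<in> set (states M') \<and> t \<in> set (states M') \<and> \<alpha> \<in> actions M'"
    if "(s, \<alpha>, t) \<in> set (delta M')" for s \<alpha> t
  proof (cases "(s, \<alpha>, t) \<in> set (delta M)")
    case True
    with olds actions_subset show ?thesis by (auto simp: add_checker_def)
  next
    case False
    with that obtain j where j: "j < length checks" "s = (if j = 0 then q else marker + j)"
        "\<alpha> = checks ! j" "t = marker + Suc j"
      by (auto simp: delta' checker_trans_def set_chain)
    then have "s \<in> set (states M')"
      using q chain_target_in_states[of "j - 1"] by (cases j) (auto simp: add_checker_def)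
    with j chain_target_in_states checks_actions show ?thesis by auto
  qed
  then show ?thesis
    using la init by (auto simp: wf_fifo_def add_checker_def)
qed

lemma valid_langs': "valid_langs M' As'"
  unfolding valid_langs_def
proof (intro conjI allI impI)
  show "length As' = nch M'" using lA by (simp add: init_nch_M')
  fix c assume "c < nch M'"
  then have c: "c < nch M" by (simp add: init_nch_M')
  then have L: "nfa_lang (As' ! c) = {u @ [marker] | u. u \<in> nfa_lang (As ! c)}"
    using lA by (simp add: nfa_lang_snoc)
  show "nfa_lang (As' ! c) \<noteq> {}" "bounded_lang (nfa_lang (As' ! c))"
    using vl c bounded_lang_snoc unfolding L valid_langs_def by auto
  have "nfa_lang (As ! c) \<subseteq> lists (set (alph M ! c))"
    using vl c by (simp add: valid_langs_def)
  then show "nfa_lang (As' ! c) \<subseteq> lists (set (alph M' ! c))"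
    unfolding L using c la by (fastforce simp: add_checker_def)
qed

lemma target_in_states: "checker_target M q ws \<in> set (states M')"
proof (cases "ws = []")
  case True
  with q show ?thesis by (simp add: checker_target_def add_checker_def)
next
  case False
  then have "length checks > 0"
    by (simp add: check_channels_eq_Nil)
  with chain_target_in_states[of "length checks - 1"] False show ?thesis
    by (simp add: checker_target_def)
qed

lemma reach_forward:
  assumes "(q, ws) \<in> Reach M (LsendA M As)"
  shows "\<exists>v. (checker_target M q ws, v) \<in> Reach M' (LsendA M' As')"
proof -
  obtain \<sigma> where \<sigma>: "\<sigma> \<in> LsendA M As" "runs_in (set (delta M)) (init M, replicate (nch M) []) \<sigma> (q, ws)"
    using assms by (auto simp: Reach_iff_runs_in)
  obtain v where v: "apply_acts checks ws = Some v"
    using apply_check_channels[of ws 0 ws marker] by auto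
  have "runs_in (set (delta M')) (q, ws) checks (checker_target M q ws, v)"
    using runs_in_chain[of q marker checks "set (delta M')" 0 ws v] v
    by (simp add: delta' checker_trans_def checker_target_def check_channels_eq_Nil)
  moreover have "runs_in (set (delta M')) (init M, replicate (nch M) []) \<sigma> (q, ws)"
    using \<sigma>(2) runs_in_mono by (auto simp: delta')
  ultimately have "runs_in (set (delta M')) (init M, replicate (nch M) []) (\<sigma> @ checks)
      (checker_target M q ws, v)"
    unfolding runs_in_append by blast
  moreover have "\<sigma> @ checks \<in> LsendA M' As'"
  proof -
    have "set \<sigma> \<subseteq> actions M" "\<forall>c<nch M. proj_send c \<sigma> \<in> nfa_lang (As ! c)"
      using \<sigma>(1) by (simp_all add: LsendA_iff)
    then show ?thesis
      unfolding LsendA' using actions_subset checks_actions proj_send_checks by auto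
  qed
  ultimately show ?thesis
    by (auto simp: Reach_iff_runs_in init_nch_M')
qed

lemma old_transitions: "set (delta M') \<inter> set (states M) \<times> UNIV \<times> set (states M) \<subseteq> set (delta M)"
  using state_less_marker by (fastforce simp: delta' checker_trans_def set_chain)

lemma exit_transition:
  assumes "(s, \<alpha>, t) \<in> set (delta M')" "s \<in> set (states M)" "t \<notin> set (states M)"
  shows "s = q \<and> \<alpha> = checks ! 0 \<and> t = marker + 1"
proof -
  have "(s, \<alpha>, t) \<in> set (checker_trans M q ws)"
    using assms olds by (auto simp: delta')
  then obtain j where j: "s = (if j = 0 then q else marker + j)" "\<alpha> = checks ! j" "t = marker + Suc j"
    by (auto simp: checker_trans_def set_chain)
  moreover have "j = 0"
  proof (rule ccontr)
    assume "j \<noteq> 0"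
    with j(1) state_less_marker[OF assms(2)] show False by simp
  qed
  ultimately show ?thesis by simp
qed

text \<open>A run reaching the target state leaves the old states only through the chain, which it
  then follows to its end.\<close>

lemma run_to_target:
  assumes "runs_in (set (delta M')) (init M, replicate (nch M) []) \<sigma> (checker_target M q ws, v)"
  obtains \<sigma>1 v1 where "\<sigma> = \<sigma>1 @ checks"
    "runs_in (set (delta M)) (init M, replicate (nch M) []) \<sigma>1 (q, v1)" "apply_acts checks v1 = Some v"
proof (cases "ws = []")
  case True
  with assms that show ?thesis
    by (simp add: add_checker_def checker_trans_def chain_def checker_target_def)
next
  case False
  let ?S = "set (states M)" and ?K = "length checks"
  have K: "?K > 0"
    using False by (simp add: check_channels_eq_Nil)
  have target: "checker_target M q ws = marker + ?K"
    using False by (simp add: checker_target_def)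
  have run: "runs_in (set (delta M')) (init M, replicate (nch M) []) \<sigma> (marker + ?K, v)"
    using assms target by simp
  have start: "fst (init M, replicate (nch M) []) \<in> ?S"
    using init by simp
  have exit: "fst (marker + ?K, v) \<notin> ?S"
    using state_less_marker[of "marker + ?K"] by auto
  obtain \<sigma>1 \<alpha> \<sigma>2 c1 c2 where ex: "\<sigma> = \<sigma>1 @ \<alpha> # \<sigma>2"
      "runs_in (set (delta M') \<inter> ?S \<times> UNIV \<times> ?S) (init M, replicate (nch M) []) \<sigma>1 c1"
      "fst c1 \<in> ?S" "fst c2 \<notin> ?S" "(fst c1, \<alpha>, fst c2) \<in> set (delta M')"
      "apply_act \<alpha> (snd c1) = Some (snd c2)" "runs_in (set (delta M')) c2 \<sigma>2 (marker + ?K, v)"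
    using runs_in_first_exit[OF run start exit] by blast
  have exit_tr: "fst c1 = q" "\<alpha> = checks ! 0" "fst c2 = marker + 1"
    using exit_transition[OF ex(5) ex(3,4)] by simp_all
  have "\<sigma>2 = drop 1 checks \<and> apply_acts \<sigma>2 (snd c2) = Some v"
  proof (rule runs_in_chainD)
    show "set (delta M') = set (chain q marker checks) \<union> set (delta M)"
      by (simp add: delta' checker_trans_def)
    show "\<forall>(s, \<alpha>, t) \<in> set (delta M). s < marker"
      using olds state_less_marker by blast
    show "runs_in (set (delta M')) (marker + 1, snd c2) \<sigma>2 (marker + ?K, v)"
      using ex(7) exit_tr(3) by (metis prod.collapse)
  qed (use q state_less_marker K in \<open>auto simp: Suc_le_eq\<close>)
  moreover have "checks = checks ! 0 # drop 1 checks"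
    using K by (simp add: Cons_nth_drop_Suc)
  ultimately have checks: "checks = \<alpha> # \<sigma>2" "apply_acts \<sigma>2 (snd c2) = Some v"
    using exit_tr(2) by auto
  show ?thesis
  proof (rule that)
    show "\<sigma> = \<sigma>1 @ checks"
      using ex(1) checks(1) by simp
    show "runs_in (set (delta M)) (init M, replicate (nch M) []) \<sigma>1 (q, snd c1)"
      using runs_in_mono[OF ex(2) old_transitions] exit_tr(1) by (metis prod.collapse)
    show "apply_acts checks (snd c1) = Some v"
      using checks ex(6) by simp
  qed
qed

lemma reach_backward:
  assumes "(checker_target M q ws, v) \<in> Reach M' (LsendA M' As')"
  shows "(q, ws) \<in> Reach M (LsendA M As)"
proof -
  obtain \<sigma> where \<sigma>: "\<sigma> \<in> LsendA M' As'"
      "runs_in (set (delta M')) (init M, replicate (nch M) []) \<sigma> (checker_target M q ws, v)"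
    using assms by (auto simp: Reach_iff_runs_in init_nch_M')
  obtain \<sigma>1 v1 where dec: "\<sigma> = \<sigma>1 @ checks"
      "runs_in (set (delta M)) (init M, replicate (nch M) []) \<sigma>1 (q, v1)" "apply_acts checks v1 = Some v"
    using run_to_target[OF \<sigma>(2)] by blast
  have cfg1: "is_config M (q, v1)"
    using reachable_is_config[OF wf dec(2)] .
  have "\<forall>j<length ws. 0 + j < length v1 \<and> v1 ! (0 + j) = ws ! j"
    by (rule apply_check_channelsD[OF dec(3)])
      (use cfg1 lw ws_alph marker_notin_alph in \<open>fastforce simp: is_config_def\<close>)
  then have "v1 = ws"
    using cfg1 lw by (auto simp: is_config_def intro: nth_equalityI)
  moreover have "\<sigma>1 \<in> LsendA M As"
  proof -
    have "proj_send c \<sigma>1 \<in> nfa_lang (As ! c)" if "c < nch M" for c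
      using \<sigma>(1) that dec(1) proj_send_checks by (auto simp: LsendA')
    then show ?thesis
      using wf_runs_actions[OF wf dec(2)] by (simp add: LsendA_iff)
  qed
  ultimately show ?thesis
    using dec(2) by (auto simp: Reach_iff_runs_in)
qed

end

lemma reach_to_cs_correct:
  assumes "valid_reach i"
  shows "valid_cs (reach_to_cs i) \<and> (IB_reach i \<longleftrightarrow> IB_cs_reach (reach_to_cs i))"
proof -
  obtain M As q ws where i: "i = (M, As, (q, ws))" by (cases i) auto
  interpret reach_instance M As q ws
    using assms by unfold_locales (simp add: i)
  show ?thesis
    using wf' valid_langs' target_in_states reach_forward reach_backward
    by (auto simp: i reach_to_cs_def valid_cs_def IB_reach_def IB_cs_reach_def)
qed

section \<open>The reductions are computable on codes\<close>

fun lnth :: "nat \<Rightarrow> nat \<Rightarrow> nat" where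
  "lnth 0 l = lhd l"
| "lnth (Suc k) l = lnth k (ltl l)"

lemma lnth_list_encode [simp]: "k < length xs \<Longrightarrow> lnth k (list_encode xs) = xs ! k"
proof (induction k arbitrary: xs)
  case (Suc k)
  then show ?case by (cases xs) auto
qed (auto simp: neq_Nil_conv)

lemma computable_lnth [intro!]: "computable f \<Longrightarrow> computable (\<lambda>n. lnth k (f n))"
  by (induction k arbitrary: f) auto

declare lnth.simps [simp del]

definition llength :: "nat \<Rightarrow> nat" where "llength l = lfoldl (\<lambda>z x acc. Suc acc) 0 l 0"

lemma llength_list_encode [simp]: "llength (list_encode xs) = length xs"
proof -
  have "foldl (\<lambda>acc x. Suc acc) a xs = a + length xs" for a
    by (induction xs arbitrary: a) auto
  then show ?thesis by (simp add: llength_def)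
qed

lemma computable_llength [intro!]: "computable f \<Longrightarrow> computable (\<lambda>n. llength (f n))"
  unfolding llength_def by (intro computable_lfoldl) (auto simp: computable3_def)

definition lconcat_indexed_step :: "(nat \<Rightarrow> nat \<Rightarrow> nat \<Rightarrow> nat) \<Rightarrow> nat \<Rightarrow> nat \<Rightarrow> nat \<Rightarrow> nat" where
  "lconcat_indexed_step G z x acc = prod_encode (Suc (pfst acc), lappend (psnd acc) (G z (pfst acc) x))"

definition lconcat_indexed :: "(nat \<Rightarrow> nat \<Rightarrow> nat \<Rightarrow> nat) \<Rightarrow> nat \<Rightarrow> nat \<Rightarrow> nat" where
  "lconcat_indexed G z l = psnd (lfoldl (lconcat_indexed_step G) z l (prod_encode (0, 0)))"

lemma lconcat_indexed_list_encode:
  assumes "\<And>k x. x \<in> set xs \<Longrightarrow> G z k (enc x) = list_encode (map e (F k x))"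
  shows "lconcat_indexed G z (list_encode (map enc xs)) = list_encode (map e (concat_indexed F 0 xs))"
proof -
  have "foldl (\<lambda>acc x. lconcat_indexed_step G z x acc) (prod_encode (k, list_encode (map e acc0)))
      (map enc xs) =
      prod_encode (k + length xs, list_encode (map e (acc0 @ concat_indexed F k xs)))" for k acc0
    using assms
  proof (induction xs arbitrary: k acc0)
    case (Cons x xs)
    then show ?case
      using Cons.IH[of "Suc k" "acc0 @ F k x"] by (simp add: lconcat_indexed_step_def)
  qed simp
  from this[of 0 "[]"] show ?thesis
    by (simp add: lconcat_indexed_def)
qed

lemma computable_lconcat_indexed [intro]:
  assumes "computable3 G" "computable z" "computable l"
  shows "computable (\<lambda>n. lconcat_indexed G (z n) (l n))"
proof -
  have "computable3 (lconcat_indexed_step G)"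
    unfolding computable3_def lconcat_indexed_step_def
    by (intro computable_prod_encode computable_Suc computable_lappend computable3_apply[OF assms(1)]
        computable_pfst computable_psnd computable_id)
  then show ?thesis
    unfolding lconcat_indexed_def using assms(2,3)
    by (intro computable_psnd computable_lfoldl computable_const)
qed

definition snd_code :: "nat \<Rightarrow> nat \<Rightarrow> nat" where "snd_code c a = 2 * prod_encode (c, a)"
definition rcv_code :: "nat \<Rightarrow> nat \<Rightarrow> nat" where "rcv_code c a = Suc (2 * prod_encode (c, a))"

lemma enc_act_code [simp]: "enc_act (Snd c a) = snd_code c a" "enc_act (Rcv c a) = rcv_code c a"
  by (simp_all add: snd_code_def rcv_code_def sum_encode_def)

declare enc_act.simps [simp del]

definition trans_code :: "nat \<Rightarrow> nat \<Rightarrow> nat \<Rightarrow> nat" where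
  "trans_code s a t = prod_encode (s, prod_encode (a, t))"

definition enc_trans :: "nat \<times> act \<times> nat \<Rightarrow> nat" where
  "enc_trans = (\<lambda>(s, \<alpha>, t). trans_code s (enc_act \<alpha>) t)"

lemma enc_trans_simp [simp]: "enc_trans (s, \<alpha>, t) = trans_code s (enc_act \<alpha>) t"
  by (simp add: enc_trans_def)

lemma computable_codes [intro!]:
  "computable f \<Longrightarrow> computable g \<Longrightarrow> computable (\<lambda>n. snd_code (f n) (g n))"
  "computable f \<Longrightarrow> computable g \<Longrightarrow> computable (\<lambda>n. rcv_code (f n) (g n))"
  "computable f \<Longrightarrow> computable g \<Longrightarrow> computable h \<Longrightarrow> computable (\<lambda>n. trans_code (f n) (g n) (h n))"
  unfolding snd_code_def rcv_code_def trans_code_def by auto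

definition fifo_code :: "nat \<Rightarrow> nat \<Rightarrow> nat \<Rightarrow> nat \<Rightarrow> nat \<Rightarrow> nat" where
  "fifo_code st n al de i = lcons st (lcons n (lcons al (lcons de (lcons i 0))))"

lemma enc_fifo_code:
  "enc_fifo M = fifo_code (list_encode (states M)) (nch M) (enc_nll (alph M))
     (list_encode (map enc_trans (delta M))) (init M)"
  by (simp add: enc_fifo_def fifo_code_def enc_trans_def trans_code_def case_prod_beta)

lemma computable_fifo_code [intro!]:
  "computable a \<Longrightarrow> computable b \<Longrightarrow> computable c \<Longrightarrow> computable d \<Longrightarrow> computable e \<Longrightarrow>
   computable (\<lambda>n. fifo_code (a n) (b n) (c n) (d n) (e n))"
  unfolding fifo_code_def by (intro computable_lcons computable_const)

text \<open>The index \<open>1\<close> is written \<open>Suc 0\<close>, the form in which the simplifier leaves it.\<close>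

lemma lnth_enc_fifo [simp]:
  "lnth 0 (enc_fifo M) = list_encode (states M)" "lnth (Suc 0) (enc_fifo M) = nch M"
  "lnth 2 (enc_fifo M) = enc_nll (alph M)" "lnth 3 (enc_fifo M) = list_encode (map enc_trans (delta M))"
  "lnth 4 (enc_fifo M) = init M"
  by (simp_all add: enc_fifo_code fifo_code_def)

definition add_channel_code :: "nat \<Rightarrow> nat \<Rightarrow> nat \<Rightarrow> nat" where
  "add_channel_code m tsc D = fifo_code (lcons D (lnth 0 m)) (Suc (lnth 1 m))
     (lappend (lnth 2 m) (list_encode [list_encode [0]])) (lappend tsc (lnth 3 m)) (lnth 4 m)"

lemma enc_fifo_add_channel:
  "enc_fifo (add_channel M ts D) = add_channel_code (enc_fifo M) (list_encode (map enc_trans ts)) D"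
  by (subst enc_fifo_code) (simp add: add_channel_code_def add_channel_def enc_nll_def del: enc_trans_simp)

lemma computable_add_channel_code [intro!]:
  "computable a \<Longrightarrow> computable b \<Longrightarrow> computable c \<Longrightarrow> computable (\<lambda>n. add_channel_code (a n) (b n) (c n))"
  unfolding add_channel_code_def by (intro computable_fifo_code computable_lcons computable_lnth
      computable_Suc computable_lappend computable_const)

lemma enc_langs_snoc: "enc_langs (As @ [A]) = lappend (enc_langs As) (list_encode [enc_nfa A])"
  by (simp add: enc_langs_def)

definition cs_to_dl_code :: "nat \<Rightarrow> nat" where
  "cs_to_dl_code i = (let m = lnth 0 i; q = lnth 2 i; n = lnth 1 m in
     list_encode [add_channel_code m
       (lcons (trans_code q (snd_code n 0) m) (lmap (\<lambda>n p. trans_code p (snd_code n 0) p) n (lnth 0 m))) m,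
       lappend (lnth 1 i) (list_encode [enc_nfa nfa_opt0])])"

lemma cs_to_dl_code_correct: "cs_to_dl_code (enc_cs i) = enc_dl (cs_to_dl i)"
proof -
  obtain M As q where i: "i = (M, As, q)" by (cases i)
  have "list_encode (map enc_trans (cs_to_dl_trans M q)) =
      lcons (trans_code q (snd_code (nch M) 0) (enc_fifo M))
        (lmap (\<lambda>n p. trans_code p (snd_code n 0) p) (nch M) (list_encode (states M)))"
    by (simp add: cs_to_dl_trans_def comp_def)
  then show ?thesis
    by (simp add: i enc_cs_def enc_dl_def cs_to_dl_def cs_to_dl_code_def Let_def enc_fifo_add_channel
        enc_langs_snoc del: enc_trans_simp)
qed

lemma computable_cs_to_dl_code: "computable cs_to_dl_code"
proof -
  have "computable2 (\<lambda>n p. trans_code p (snd_code n 0) p)"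
    unfolding computable2_def by (intro computable_codes computable_pfst computable_psnd computable_id
        computable_const)
  then show ?thesis
    unfolding cs_to_dl_code_def Let_def
    by (intro computable_list_encode_Cons computable_lcons computable_add_channel_code computable_lnth
        computable_codes
        computable_lmap computable_lappend computable_id computable_const)
qed

definition drain_code :: "nat \<Rightarrow> nat \<Rightarrow> nat \<Rightarrow> nat" where
  "drain_code E c l =
     lmap (\<lambda>p a. trans_code (pfst p) (rcv_code (psnd p) a) (pfst p)) (prod_encode (E, c)) l"

lemma drain_loops_code:
  "lconcat_indexed drain_code E (enc_nll als) = list_encode (map enc_trans (drain_loops E als))"
  unfolding drain_loops_def enc_nll_def
  by (rule lconcat_indexed_list_encode) (simp add: drain_code_def comp_def)

definition zeros_code :: "nat \<Rightarrow> nat" where "zeros_code m = (lcons 0 ^^ m) 0"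

lemma zeros_code_eq: "zeros_code m = enc_nll (replicate m [])"
proof -
  have "(lcons 0 ^^ m) 0 = list_encode (replicate m 0)"
    by (induction m) simp_all
  then show ?thesis by (simp add: zeros_code_def enc_nll_def)
qed

lemma computable_zeros_code: "computable f \<Longrightarrow> computable (\<lambda>n. zeros_code (f n))"
  unfolding zeros_code_def by (intro computable_funpow computable_lcons computable_const computable_id)

definition cs_to_reach_code :: "nat \<Rightarrow> nat" where
  "cs_to_reach_code i = (let m = lnth 0 i; q = lnth 2 i; n = lnth 1 m in
     list_encode [add_channel_code m
       (lcons (trans_code q (snd_code n 0) m)
          (lconcat_indexed drain_code m (lappend (lnth 2 m) (list_encode [list_encode [0]])))) m,
       lappend (lnth 1 i) (list_encode [enc_nfa nfa_opt0]),
       prod_encode (m, zeros_code (Suc n))])"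

lemma cs_to_reach_code_correct: "cs_to_reach_code (enc_cs i) = enc_reach (cs_to_reach i)"
proof -
  obtain M As q where i: "i = (M, As, q)" by (cases i)
  have "lappend (enc_nll (alph M)) (list_encode [list_encode [0]]) = enc_nll (alph M @ [[0]])"
    by (simp add: enc_nll_def)
  then have "list_encode (map enc_trans (cs_to_reach_trans M q)) =
      lcons (trans_code q (snd_code (nch M) 0) (enc_fifo M))
        (lconcat_indexed drain_code (enc_fifo M)
          (lappend (enc_nll (alph M)) (list_encode [list_encode [0]])))"
    by (simp add: cs_to_reach_trans_def drain_loops_code)
  then show ?thesis
    by (simp add: i enc_cs_def enc_reach_def cs_to_reach_def cs_to_reach_code_def Let_def
        enc_fifo_add_channel enc_langs_snoc zeros_code_eq del: enc_trans_simp)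
qed

lemma computable_cs_to_reach_code: "computable cs_to_reach_code"
proof -
  have "computable2 (\<lambda>p a. trans_code (pfst p) (rcv_code (psnd p) a) (pfst p))"
    unfolding computable2_def by (intro computable_codes computable_pfst computable_psnd computable_id)
  then have "computable3 drain_code"
    unfolding computable3_def drain_code_def
    by (intro computable_lmap computable_prod_encode computable_pfst computable_psnd computable_id)
  then show ?thesis
    unfolding cs_to_reach_code_def Let_def
    by (intro computable_zeros_code computable_list_encode_Cons computable_lcons
        computable_add_channel_code computable_lnth
        computable_codes computable_lconcat_indexed computable_lappend computable_prod_encode
        computable_Suc computable_id computable_const)
qed

definition check_code :: "nat \<Rightarrow> nat \<Rightarrow> nat \<Rightarrow> nat" where
  "check_code h k w = lcons (snd_code k h) (lappend (lmap rcv_code k w) (list_encode [rcv_code k h]))"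

lemma check_channels_code:
  "lconcat_indexed check_code h (enc_nll ws) = list_encode (map enc_act (check_channels h 0 ws))"
  unfolding check_channels_def enc_nll_def
  by (rule lconcat_indexed_list_encode) (simp add: check_code_def check_channel_def comp_def)

definition chain_code :: "nat \<Rightarrow> nat \<Rightarrow> nat \<Rightarrow> nat" where
  "chain_code z i x =
     list_encode [trans_code (if i = 0 then pfst z else psnd z + i) x (psnd z + Suc i)]"

lemma chain_code_eq:
  "lconcat_indexed chain_code (prod_encode (q, B)) (list_encode (map enc_act acts)) =
     list_encode (map enc_trans (chain q B acts))"
  unfolding chain_def by (rule lconcat_indexed_list_encode) (simp add: chain_code_def)

definition nfa_snoc_code :: "nat \<Rightarrow> nat \<Rightarrow> nat" where
  "nfa_snoc_code h a = list_encode [lnth 0 a,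
     lappend (lmap (\<lambda>z f. trans_code f (pfst z) (psnd z)) (prod_encode (h, a)) (lnth 2 a)) (lnth 1 a),
     list_encode [a]]"

lemma nfa_snoc_code_eq: "nfa_snoc_code h (enc_nfa A) = enc_nfa (nfa_snoc h A)"
proof -
  let ?F = "enc_nfa A"
  have parts: "lnth 0 ?F = list_encode (nstart A)" "lnth 1 ?F = list_encode (map enc_ntrans (ntrans A))"
    "lnth 2 ?F = list_encode (nfinal A)"
    by (subst enc_nfa_eq, simp)+
  have "(\<lambda>f. trans_code f (pfst (prod_encode (h, ?F))) (psnd (prod_encode (h, ?F)))) =
      enc_ntrans \<circ> (\<lambda>f. (f, h, ?F))"
    by (auto simp: enc_ntrans_def trans_code_def)
  then have "nfa_snoc_code h ?F = list_encode [list_encode (nstart A),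
      list_encode (map enc_ntrans (map (\<lambda>f. (f, h, ?F)) (nfinal A) @ ntrans A)), list_encode [?F]]"
    unfolding nfa_snoc_code_def parts by simp
  also have "\<dots> = enc_nfa (nfa_snoc h A)"
    by (subst enc_nfa_eq[of "nfa_snoc h A"]) (simp add: nfa_snoc_def)
  finally show ?thesis .
qed

definition reach_to_cs_code :: "nat \<Rightarrow> nat" where
  "reach_to_cs_code i = (let m = lnth 0 i; q = pfst (lnth 2 i); wsc = psnd (lnth 2 i);
     checks = lconcat_indexed check_code m wsc;
     trans = lconcat_indexed chain_code (prod_encode (q, m)) checks in
     list_encode [fifo_code (lappend (lmap (\<lambda>z x. psnd (psnd x)) 0 trans) (lnth 0 m)) (lnth 1 m)
         (lmap lcons m (lnth 2 m)) (lappend trans (lnth 3 m)) (lnth 4 m),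
       lmap nfa_snoc_code m (lnth 1 i),
       if wsc = 0 then q else m + llength checks])"

lemma enc_nll_eq_0_iff: "enc_nll ws = 0 \<longleftrightarrow> ws = []"
  by (cases ws) (simp_all add: enc_nll_def)

lemma enc_fifo_add_checker:
  "enc_fifo (add_checker M q ws) = fifo_code
     (list_encode (map (\<lambda>(s, \<alpha>, t). t) (checker_trans M q ws) @ states M)) (nch M)
     (enc_nll (map ((#) (enc_fifo M)) (alph M)))
     (list_encode (map enc_trans (checker_trans M q ws @ delta M))) (init M)"
  by (subst enc_fifo_code) (simp add: add_checker_def del: enc_trans_simp)

lemma reach_to_cs_code_correct: "reach_to_cs_code (enc_reach i) = enc_cs (reach_to_cs i)"
proof -
  obtain M As q ws where i: "i = (M, As, (q, ws))" by (cases i) auto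
  let ?h = "enc_fifo M"
  have parts: "lnth 0 (enc_reach i) = ?h" "lnth 1 (enc_reach i) = enc_langs As"
    "lnth 2 (enc_reach i) = prod_encode (q, enc_nll ws)"
    by (simp_all add: i enc_reach_def)
  have trans: "lconcat_indexed chain_code (prod_encode (q, ?h))
      (lconcat_indexed check_code ?h (enc_nll ws)) =
      list_encode (map enc_trans (checker_trans M q ws))"
    by (simp add: check_channels_code chain_code_eq checker_trans_def)
  have states: "map (\<lambda>x. psnd (psnd (enc_trans x))) ts = map (\<lambda>(s, \<alpha>, t). t) ts" for ts
    by (auto simp: trans_code_def)
  have alph: "lmap lcons ?h (enc_nll (alph M)) = enc_nll (map ((#) ?h) (alph M))"
    by (simp add: enc_nll_def comp_def)
  have langs: "lmap nfa_snoc_code ?h (enc_langs As) = enc_langs (map (nfa_snoc ?h) As)"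
    by (simp add: enc_langs_def comp_def nfa_snoc_code_eq)
  show ?thesis
    unfolding reach_to_cs_code_def Let_def parts pfst_prod_encode psnd_prod_encode trans lnth_enc_fifo
      alph langs enc_nll_eq_0_iff
    unfolding check_channels_code
    by (simp add: i enc_cs_def reach_to_cs_def enc_fifo_add_checker checker_target_def comp_def states
        del: enc_trans_simp)
qed

lemma computable_reach_to_cs_code: "computable reach_to_cs_code"
proof -
  have "computable2 rcv_code"
    unfolding computable2_def by (intro computable_codes computable_pfst computable_psnd computable_id)
  then have "computable3 check_code"
    unfolding computable3_def check_code_def
    by (intro computable_lcons computable_codes computable_lappend computable_lmap
        computable_list_encode_Cons
        computable_pfst computable_psnd computable_id computable_const)
  moreover have "computable3 chain_code"
    unfolding computable3_def chain_code_def
    by (intro computable_list_encode_Cons computable_codes computable_if_zero computable_add computable_Suc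
        computable_pfst computable_psnd computable_id computable_const)
  moreover have "computable2 nfa_snoc_code"
  proof -
    have g: "computable2 (\<lambda>z f. trans_code f (pfst z) (psnd z))"
      unfolding computable2_def by (intro computable_codes computable_pfst computable_psnd computable_id)
    show ?thesis
      unfolding computable2_def nfa_snoc_code_def
      by (intro computable_list_encode_Cons computable_lnth computable_lappend computable_lmap[OF g]
          computable_prod_encode computable_pfst computable_psnd computable_id computable_const)
  qed
  moreover have "computable2 (\<lambda>z x. psnd (psnd x))" "computable2 lcons"
    unfolding computable2_def by (intro computable_psnd computable_lcons computable_pfst computable_id)+
  ultimately show ?thesis
    unfolding reach_to_cs_code_def Let_def
    by (intro computable_list_encode_Cons computable_fifo_code computable_lappend computable_lmap
        computable_lconcat_indexed computable_lnth computable_if_zero computable_add computable_llength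
        computable_prod_encode computable_pfst computable_psnd computable_id computable_const)
qed

lemma many_one_reducibleI:
  assumes "computable f"
    and "\<And>i. validA i \<Longrightarrow> validB (r i) \<and> (yesA i \<longleftrightarrow> yesB (r i))"
    and "\<And>i. f (encA i) = encB (r i)"
  shows "many_one_reducible encA validA yesA encB validB yesB"
  unfolding many_one_reducible_def using assms by metis

lemma many_one_reducible_trans:
  assumes "many_one_reducible encA validA yesA encB validB yesB"
    and "many_one_reducible encB validB yesB encC validC yesC"
  shows "many_one_reducible encA validA yesA encC validC yesC"
proof -
  obtain f where f: "computable f"
    "\<forall>i. validA i \<longrightarrow> (\<exists>j. validB j \<and> f (encA i) = encB j \<and> (yesA i \<longleftrightarrow> yesB j))"
    using assms(1) unfolding many_one_reducible_def by blast
  obtain g where g: "computable g"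
    "\<forall>j. validB j \<longrightarrow> (\<exists>k. validC k \<and> g (encB j) = encC k \<and> (yesB j \<longleftrightarrow> yesC k))"
    using assms(2) unfolding many_one_reducible_def by blast
  have "computable (\<lambda>n. g (f n))"
    using computable_compose[OF g(1) f(1)] .
  with f(2) g(2) show ?thesis
    unfolding many_one_reducible_def by metis
qed

theorem proposition4p2:
  shows "(many_one_reducible enc_reach valid_reach IB_reach enc_cs valid_cs IB_cs_reach \<and>
          many_one_reducible enc_cs valid_cs IB_cs_reach enc_reach valid_reach IB_reach) \<and>
         many_one_reducible enc_reach valid_reach IB_reach enc_dl valid_dl IB_deadlock"
proof -
  have reach_cs: "many_one_reducible enc_reach valid_reach IB_reach enc_cs valid_cs IB_cs_reach"
    using computable_reach_to_cs_code reach_to_cs_correct reach_to_cs_code_correct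
    by (rule many_one_reducibleI)
  have cs_reach: "many_one_reducible enc_cs valid_cs IB_cs_reach enc_reach valid_reach IB_reach"
    using computable_cs_to_reach_code cs_to_reach_correct cs_to_reach_code_correct
    by (rule many_one_reducibleI)
  have cs_dl: "many_one_reducible enc_cs valid_cs IB_cs_reach enc_dl valid_dl IB_deadlock"
    using computable_cs_to_dl_code cs_to_dl_correct cs_to_dl_code_correct
    by (rule many_one_reducibleI)
  show ?thesis
    using reach_cs cs_reach many_one_reducible_trans[OF reach_cs cs_dl] by blast
qed

end
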